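(* Let $A$ be a generator matrix of the repetition $[n_a,1,n_a]_q$ code and let $B$ be a parity-check matrix of a $q$-ary Hamming code with parameters $[n_b,k_b,3]_q$, where $n_b=(q^{m_b}-1)/(q-1)$ and $k_b=n_b-m_b$. Let $C$ be the linear code over $\mathbb{F}_q$ with parity-check matrix $H=A\otimes B$. Then: (i) $C$ has length $n=n_a n_b$, dimension $k=n-m_b$ and covering radius $\rho=1$; (ii) if $n_a>1$ then the minimum distance of $C$ is $d=2$, and if $n_a=1$ then $d=3$; (iii) $\mathrm{Aut}(C)$ is transitive, and consequently $C$ is completely transitive and completely regular.
   Context: $\mathbb{F}_q$ is the finite field with $q$ elements. The repetition $[n,1,n]_q$ code is $\{(c,\dots,c):c\in\mathbb{F}_q\}$. For $m\ge2$, a $q$-ary Hamming code of length $(q^m-1)/(q-1)$ is a linear code with an $m\times (q^m-1)/(q-1)$ parity-check matrix whose columns are nonzero and pairwise linearly independent. The Kronecker product $A\otimes B$ of $A=[a_{r,s}]$ and $B$ is obtained by replacing each entry $a_{r,s}$ by the block $a_{r,s}B$. Covering radius $\rho=\max_{\bf v}\min_{{\bf x}\in C}d({\bf v},{\bf x})$ (Hamming distance). A linear automorphism of $\mathbb{F}_q^n$ is ${\bf x}\mapsto {\bf x}M$ with $M$ a monomial matrix; $\mathrm{Aut}(C)$ is the group of linear automorphisms preserving $C$; it is called transitive if it acts transitively on the set of weight-one vectors of $\mathbb{F}_q^n$. $\mathrm{Aut}(C)$ acts on cosets by $\phi({\bf v}+C)=\phi({\bf v})+C$; $C$ is completely transitive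 if this action has exactly $\rho+1$ orbits. $C$ is completely regular if for every vector ${\bf x}$, with $t=d({\bf x},C)$, the number of codewords at distance $i$ from ${\bf x}$ depends only on $t$ and $i$. *)

theory Defs
  imports Complex_Main "HOL-Library.Function_Algebras" "HOL-Library.Cardinality"
begin

text \<open>Vectors of length n over a finite field 'a are functions nat => 'a that vanish
outside {..<n}. Matrices are functions nat => nat => 'a with explicit dimensions.\<close>

definition vecs :: "nat \<Rightarrow> (nat \<Rightarrow> 'a::zero) set" where
  "vecs n = {v. \<forall>i\<ge>n. v i = 0}"

definition hdist :: "nat \<Rightarrow> (nat \<Rightarrow> 'a) \<Rightarrow> (nat \<Rightarrow> 'a) \<Rightarrow> nat" where
  "hdist n u v = card {i. i < n \<and> u i \<noteq> v i}"

definition hweight :: "nat \<Rightarrow> (nat \<Rightarrow> 'a::zero) \<Rightarrow> nat" where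
  "hweight n v = card {i. i < n \<and> v i \<noteq> 0}"

definition vscale :: "'a::field \<Rightarrow> (nat \<Rightarrow> 'a) \<Rightarrow> (nat \<Rightarrow> 'a)" where
  "vscale c v = (\<lambda>i. c * v i)"

definition code_dim :: "(nat \<Rightarrow> 'a::field) set \<Rightarrow> nat" where
  "code_dim C = vector_space.dim vscale C"

definition repetition_code :: "nat \<Rightarrow> (nat \<Rightarrow> 'a::zero) set" where
  "repetition_code n = {v. \<exists>c. \<forall>i. v i = (if i < n then c else 0)}"

definition row_space :: "nat \<Rightarrow> nat \<Rightarrow> (nat \<Rightarrow> nat \<Rightarrow> 'a::comm_ring_1) \<Rightarrow> (nat \<Rightarrow> 'a) set" where
  "row_space r n G = {v. \<exists>c. \<forall>j. v j = (if j < n then (\<Sum>i<r. c i * G i j) else 0)}"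

definition is_generator_matrix ::
  "nat \<Rightarrow> nat \<Rightarrow> (nat \<Rightarrow> nat \<Rightarrow> 'a::field) \<Rightarrow> (nat \<Rightarrow> 'a) set \<Rightarrow> bool" where
  "is_generator_matrix r n G C \<longleftrightarrow>
     row_space r n G = C \<and>
     (\<forall>c. (\<forall>j<n. (\<Sum>i<r. c i * G i j) = 0) \<longrightarrow> (\<forall>i<r. c i = 0))"

definition is_hamming_pcm :: "nat \<Rightarrow> nat \<Rightarrow> (nat \<Rightarrow> nat \<Rightarrow> 'a::{field,finite}) \<Rightarrow> bool" where
  "is_hamming_pcm m n B \<longleftrightarrow>
     m \<ge> 2 \<and> n = (CARD('a) ^ m - 1) div (CARD('a) - 1) \<and>
     (\<forall>j<n. \<exists>i<m. B i j \<noteq> 0) \<and>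
     (\<forall>j<n. \<forall>j'<n. j \<noteq> j' \<longrightarrow> \<not> (\<exists>c. \<forall>i<m. B i j = c * B i j'))"

text \<open>Kronecker product of A (with column count na) and B (m_b x n_b):
entry (r*mb+i, s*nb+j) is A r s * B i j.\<close>
definition kron :: "nat \<Rightarrow> nat \<Rightarrow> (nat \<Rightarrow> nat \<Rightarrow> 'a::times) \<Rightarrow> (nat \<Rightarrow> nat \<Rightarrow> 'a) \<Rightarrow> nat \<Rightarrow> nat \<Rightarrow> 'a" where
  "kron mb nb A B = (\<lambda>r c. A (r div mb) (c div nb) * B (r mod mb) (c mod nb))"

definition pcm_code :: "nat \<Rightarrow> nat \<Rightarrow> (nat \<Rightarrow> nat \<Rightarrow> 'a::comm_ring_1) \<Rightarrow> (nat \<Rightarrow> 'a) set" where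
  "pcm_code rows n H = {x \<in> vecs n. \<forall>i<rows. (\<Sum>j<n. H i j * x j) = 0}"

definition dist_to_code :: "nat \<Rightarrow> (nat \<Rightarrow> 'a) set \<Rightarrow> (nat \<Rightarrow> 'a) \<Rightarrow> nat" where
  "dist_to_code n C v = Min (hdist n v ` C)"

definition covering_radius :: "nat \<Rightarrow> (nat \<Rightarrow> 'a::zero) set \<Rightarrow> nat" where
  "covering_radius n C = Max (dist_to_code n C ` vecs n)"

definition min_distance :: "nat \<Rightarrow> (nat \<Rightarrow> 'a) set \<Rightarrow> nat" where
  "min_distance n C = Min {hdist n x y | x y. x \<in> C \<and> y \<in> C \<and> x \<noteq> y}"

definition monomial :: "nat \<Rightarrow> (nat \<Rightarrow> nat \<Rightarrow> 'a::zero) \<Rightarrow> bool" where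
  "monomial n M \<longleftrightarrow>
     (\<forall>i<n. \<exists>!j. j < n \<and> M i j \<noteq> 0) \<and> (\<forall>j<n. \<exists>!i. i < n \<and> M i j \<noteq> 0)"

definition vmul :: "nat \<Rightarrow> (nat \<Rightarrow> 'a::comm_semiring_0) \<Rightarrow> (nat \<Rightarrow> nat \<Rightarrow> 'a) \<Rightarrow> (nat \<Rightarrow> 'a)" where
  "vmul n x M = (\<lambda>j. if j < n then (\<Sum>i<n. x i * M i j) else 0)"

definition Aut :: "nat \<Rightarrow> (nat \<Rightarrow> 'a::comm_semiring_0) set \<Rightarrow> (nat \<Rightarrow> nat \<Rightarrow> 'a) set" where
  "Aut n C = {M. monomial n M \<and> (\<lambda>x. vmul n x M) ` C = C}"

definition aut_transitive :: "nat \<Rightarrow> (nat \<Rightarrow> 'a::comm_semiring_0) set \<Rightarrow> bool" where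
  "aut_transitive n C \<longleftrightarrow>
     (\<forall>u\<in>vecs n. \<forall>v\<in>vecs n. hweight n u = 1 \<and> hweight n v = 1 \<longrightarrow>
        (\<exists>M\<in>Aut n C. vmul n u M = v))"

definition coset :: "(nat \<Rightarrow> 'a::plus) set \<Rightarrow> (nat \<Rightarrow> 'a) \<Rightarrow> (nat \<Rightarrow> 'a) set" where
  "coset C v = (\<lambda>x. v + x) ` C"

definition coset_orbit :: "nat \<Rightarrow> (nat \<Rightarrow> 'a::comm_semiring_0) set \<Rightarrow> (nat \<Rightarrow> 'a) \<Rightarrow> (nat \<Rightarrow> 'a) set set" where
  "coset_orbit n C v = {coset C (vmul n v M) | M. M \<in> Aut n C}"

definition completely_transitive :: "nat \<Rightarrow> (nat \<Rightarrow> 'a::comm_semiring_0) set \<Rightarrow> bool" where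
  "completely_transitive n C \<longleftrightarrow>
     card (coset_orbit n C ` vecs n) = covering_radius n C + 1"

definition completely_regular :: "nat \<Rightarrow> (nat \<Rightarrow> 'a::zero) set \<Rightarrow> bool" where
  "completely_regular n C \<longleftrightarrow>
     (\<forall>x\<in>vecs n. \<forall>y\<in>vecs n. dist_to_code n C x = dist_to_code n C y \<longrightarrow>
        (\<forall>i. card {c\<in>C. hdist n x c = i} = card {c\<in>C. hdist n y c = i}))"

end

theory Submission
  imports Defs "HOL-Library.FuncSet"
begin

text \<open>
  A generator matrix of the repetition code is a single nonzero constant row, so the Kronecker
  product of A and B is a nonzero multiple of the block row [B B ... B], and the code consists of
  the vectors x whose syndrome, the sum of x j times column (j mod nb) of B, vanishes. Every nonzero
  syndrome is a multiple of a column of B, so every vector is within distance one of the code; the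
  columns of B that are multiples of unit vectors provide one check position per row, so the code
  has dimension n - mb. Equal columns in two different blocks give codewords of weight two, while
  inside a single block the pairwise independence of the columns rules out weights one and two.
  Monomial automorphisms come from a permutation of the blocks combined with an invertible map of
  the syndrome space (a transvection) that permutes the columns of B up to scalars; they move any
  coordinate to any other. For a code of covering radius one with such an automorphism group the
  cosets form just two orbits, and the number of codewords at distance i from a vector is invariant
  under translation by codewords and under automorphisms, which gives complete transitivity and
  complete regularity.
\<close>

section \<open>Vectors, weights and distances\<close>

lemma zero_in_vecs: "0 \<in> vecs n"
  and add_in_vecs: "x \<in> vecs n \<Longrightarrow> y \<in> vecs n \<Longrightarrow> x + y \<in> vecs n"
  and diff_in_vecs: "x \<in> vecs n \<Longrightarrow> y \<in> vecs n \<Longrightarrow> x - y \<in> vecs n"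
  and vscale_in_vecs: "x \<in> vecs n \<Longrightarrow> vscale c x \<in> vecs n"
  for x y :: "nat \<Rightarrow> 'a::field"
  by (auto simp: vecs_def vscale_def)

lemma vscale_zero: "vscale c 0 = 0"
  by (simp add: vscale_def fun_eq_iff)

lemma sum_fun_apply: "(\<Sum>x\<in>A. f x) j = (\<Sum>x\<in>A. f x j)"
  for f :: "'b \<Rightarrow> nat \<Rightarrow> 'a::comm_monoid_add"
  by (induction A rule: infinite_finite_induct) auto

lemma sum_delta_mult: "i < (r::nat) \<Longrightarrow> (\<Sum>i'<r. (if i' = i then 1 else 0) * f i') = (f i :: 'a::semiring_1)"
proof -
  assume "i < r"
  have "(\<Sum>i'<r. (if i' = i then 1 else 0) * f i') = (\<Sum>i'<r. if i' = i then f i' else 0)"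
    by (rule sum.cong) auto
  also have "\<dots> = f i" using \<open>i < r\<close> by (simp add: sum.delta)
  finally show ?thesis .
qed

lemma sum_in_vecs: "(\<And>a. a \<in> A \<Longrightarrow> f a \<in> vecs n) \<Longrightarrow> (\<Sum>a\<in>A. f a) \<in> vecs n"
  by (simp add: vecs_def sum_fun_apply)

lemma bij_betw_restrict_vecs:
  "bij_betw (\<lambda>v. restrict v {..<n}) (vecs n :: (nat \<Rightarrow> 'a::zero) set) ({..<n} \<rightarrow>\<^sub>E UNIV)"
proof (rule bij_betw_byWitness[where f' = "\<lambda>f i. if i < n then f i else 0"])
  show "\<forall>v\<in>vecs n. (\<lambda>i. if i < n then restrict v {..<n} i else 0) = (v :: nat \<Rightarrow> 'a)"
    by (auto simp: vecs_def fun_eq_iff)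
  show "\<forall>f\<in>{..<n} \<rightarrow>\<^sub>E UNIV. restrict (\<lambda>i. if i < n then f i else (0::'a)) {..<n} = f"
    by (auto simp: fun_eq_iff PiE_def extensional_def)
qed (force simp: vecs_def)+

lemma finite_vecs: "finite (vecs n :: (nat \<Rightarrow> 'a::{zero,finite}) set)"
proof -
  have "finite ({..<n} \<rightarrow>\<^sub>E (UNIV :: 'a set))" by (simp add: finite_PiE)
  then show ?thesis using bij_betw_finite[OF bij_betw_restrict_vecs[where 'a='a, of n]] by blast
qed

lemma card_vecs: "card (vecs n :: (nat \<Rightarrow> 'a::{zero,finite}) set) = CARD('a) ^ n"
  using bij_betw_same_card[OF bij_betw_restrict_vecs] by (simp add: card_PiE)

definition unit_vec :: "nat \<Rightarrow> nat \<Rightarrow> 'a::zero_neq_one" where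
  "unit_vec p = (\<lambda>j. if j = p then 1 else 0)"

lemma unit_vec_in_vecs: "p < n \<Longrightarrow> unit_vec p \<in> vecs n"
  by (simp add: vecs_def unit_vec_def)

lemma vscale_unit_vec_in_vecs: "p < n \<Longrightarrow> vscale a (unit_vec p) \<in> vecs n"
  by (simp add: vscale_in_vecs unit_vec_in_vecs)

lemma hweight_vscale_unit_vec: "p < n \<Longrightarrow> a \<noteq> 0 \<Longrightarrow> hweight n (vscale a (unit_vec p)) = 1"
proof -
  assume "p < n" "a \<noteq> 0"
  then have "{i. i < n \<and> vscale a (unit_vec p) i \<noteq> 0} = {p}"
    by (auto simp: vscale_def unit_vec_def)
  then show ?thesis by (simp add: hweight_def)
qed

lemma hweight_eq_1_imp_vscale_unit_vec:
  assumes u: "u \<in> vecs n" "hweight n u = 1"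
  shows "\<exists>p<n. u p \<noteq> 0 \<and> u = vscale (u p) (unit_vec p)"
proof -
  obtain p where p: "{i. i < n \<and> u i \<noteq> 0} = {p}"
    using u(2) unfolding hweight_def by (rule card_1_singletonE)
  then have "u j = vscale (u p) (unit_vec p) j" for j
    using u(1) by (cases "j < n") (auto simp: vecs_def vscale_def unit_vec_def)
  then show ?thesis using p by blast
qed

lemma hweight_eq_0_iff: "z \<in> vecs n \<Longrightarrow> hweight n z = 0 \<longleftrightarrow> z = 0"
  by (auto simp: hweight_def vecs_def fun_eq_iff) (metis not_less)

lemma hdist_self: "hdist n x x = 0"
  by (simp add: hdist_def)

lemma hdist_eq_0_imp_eq:
  assumes "x \<in> vecs n" "y \<in> vecs n" "hdist n x y = 0"
  shows "x = y"
proof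
  fix i
  have "{i. i < n \<and> x i \<noteq> y i} = {}" using assms(3) by (simp add: hdist_def)
  then show "x i = y i" using assms(1,2) by (cases "i < n") (auto simp: vecs_def)
qed

lemma hdist_eq_hweight_diff: "hdist n x y = hweight n (x - y)"
  for x y :: "nat \<Rightarrow> 'a::ab_group_add"
  by (simp add: hdist_def hweight_def)

lemma hdist_diff_right: "hdist n (x - w) (y - w) = hdist n x y"
  for x y w :: "nat \<Rightarrow> 'a::ab_group_add"
  by (simp add: hdist_def)

lemma hdist_le_1_if_diff_unit_vec: "hdist n x (x - vscale a (unit_vec p)) \<le> 1"
  for x :: "nat \<Rightarrow> 'a::field"
proof -
  have "{i. i < n \<and> x i \<noteq> (x - vscale a (unit_vec p)) i} \<subseteq> {p}"
    by (auto simp: vscale_def unit_vec_def)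
  then have "card {i. i < n \<and> x i \<noteq> (x - vscale a (unit_vec p)) i} \<le> card {p}"
    by (rule card_mono[rotated]) simp
  then show ?thesis by (simp add: hdist_def)
qed

section \<open>Monomial maps\<close>

lemma vmul_diff: "vmul n (x - y) M = vmul n x M - vmul n y M"
  for x y :: "nat \<Rightarrow> 'a::comm_ring"
  by (auto simp: vmul_def fun_eq_iff algebra_simps sum_subtractf)

lemma vmul_in_vecs: "vmul n x M \<in> vecs n"
  by (simp add: vmul_def vecs_def)

lemma monomial_row_of_col:
  fixes M :: "nat \<Rightarrow> nat \<Rightarrow> 'a::field"
  assumes M: "monomial n M"
  shows "\<exists>r. bij_betw r {..<n} {..<n} \<and>
    (\<forall>j<n. M (r j) j \<noteq> 0 \<and> (\<forall>x. vmul n x M j = x (r j) * M (r j) j))"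
proof -
  define r where "r j = (THE i. i < n \<and> M i j \<noteq> 0)" for j
  have col: "\<exists>!i. i < n \<and> M i j \<noteq> 0" if "j < n" for j
    using M that by (simp add: monomial_def)
  have row: "\<exists>!j. j < n \<and> M i j \<noteq> 0" if "i < n" for i
    using M that by (simp add: monomial_def)
  have r: "r j < n \<and> M (r j) j \<noteq> 0" if "j < n" for j
    unfolding r_def using col[OF that] by (rule theI')
  have "inj_on r {..<n}"
  proof (rule inj_onI)
    fix j j' assume j: "j \<in> {..<n}" "j' \<in> {..<n}" and eq: "r j = r j'"
    then have "M (r j) j \<noteq> 0" "M (r j) j' \<noteq> 0" "r j < n" using r[of j] r[of j'] by auto
    then show "j = j'" using row[of "r j"] j by blast
  qed
  moreover have "r ` {..<n} \<subseteq> {..<n}" using r by auto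
  ultimately have bij: "bij_betw r {..<n} {..<n}"
    by (simp add: bij_betw_def endo_inj_surj)
  have vmul_eq: "vmul n x M j = x (r j) * M (r j) j" if j: "j < n" for j x
  proof -
    have "M i j = 0" if "i < n" "i \<noteq> r j" for i
      using col[OF j] r[OF j] that by blast
    then have "(\<Sum>i<n. x i * M i j) = (\<Sum>i<n. if i = r j then x (r j) * M (r j) j else 0)"
      by (intro sum.cong) auto
    also have "\<dots> = x (r j) * M (r j) j" using r[OF j] by simp
    finally show ?thesis using j by (simp add: vmul_def)
  qed
  show ?thesis using bij r vmul_eq by blast
qed

lemma monomial_hdist:
  fixes M :: "nat \<Rightarrow> nat \<Rightarrow> 'a::field"
  assumes M: "monomial n M"
  shows "hdist n (vmul n x M) (vmul n y M) = hdist n x y"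
proof -
  obtain r where r: "bij_betw r {..<n} {..<n}"
    and col: "\<forall>j<n. M (r j) j \<noteq> 0 \<and> (\<forall>x. vmul n x M j = x (r j) * M (r j) j)"
    using monomial_row_of_col[OF M] by blast
  have diff: "{j. j < n \<and> vmul n x M j \<noteq> vmul n y M j} = {j. j < n \<and> x (r j) \<noteq> y (r j)}"
    using col by auto
  have "r ` {j. j < n \<and> x (r j) \<noteq> y (r j)} = {i. i < n \<and> x i \<noteq> y i}"
    using r by (auto simp: bij_betw_def)
  then have "bij_betw r {j. j < n \<and> x (r j) \<noteq> y (r j)} {i. i < n \<and> x i \<noteq> y i}"
    by (intro bij_betw_subset[OF r]) auto
  then show ?thesis unfolding hdist_def diff by (rule bij_betw_same_card)
qed

lemma monomial_vmul_inj:
  fixes M :: "nat \<Rightarrow> nat \<Rightarrow> 'a::field"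
  assumes "monomial n M" "x \<in> vecs n" "y \<in> vecs n" "vmul n x M = vmul n y M"
  shows "x = y"
proof -
  have "hdist n (vmul n x M) (vmul n y M) = 0"
    unfolding assms(4) by (rule hdist_self)
  then have "hdist n x y = 0"
    by (simp only: monomial_hdist[OF assms(1)])
  then show ?thesis by (rule hdist_eq_0_imp_eq[OF assms(2,3)])
qed

definition perm_matrix :: "nat \<Rightarrow> (nat \<Rightarrow> nat) \<Rightarrow> (nat \<Rightarrow> 'a) \<Rightarrow> nat \<Rightarrow> nat \<Rightarrow> 'a::zero" where
  "perm_matrix n \<rho> d = (\<lambda>i j. if i < n \<and> j < n \<and> j = \<rho> i then d i else 0)"

lemma vmul_perm_matrix:
  fixes d :: "nat \<Rightarrow> 'a::field"
  assumes \<rho>: "bij_betw \<rho> {..<n} {..<n}" and i: "i < n"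
  shows "vmul n x (perm_matrix n \<rho> d) (\<rho> i) = x i * d i"
proof -
  have "\<rho> i < n" using \<rho> i by (auto dest: bij_betw_apply)
  moreover have "\<rho> i = \<rho> i' \<longleftrightarrow> i' = i" if "i' < n" for i'
    using \<rho> i that by (auto simp: bij_betw_def dest: inj_onD)
  then have "(\<Sum>i'<n. x i' * perm_matrix n \<rho> d i' (\<rho> i)) = (\<Sum>i'<n. if i' = i then x i * d i else 0)"
    using calculation by (intro sum.cong) (auto simp: perm_matrix_def)
  ultimately show ?thesis using i by (simp add: vmul_def)
qed

lemma monomial_perm_matrix:
  assumes \<rho>: "bij_betw \<rho> {..<n} {..<n}" and d: "\<forall>i<n. d i \<noteq> 0"
  shows "monomial n (perm_matrix n \<rho> d)"
  unfolding monomial_def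
proof (intro conjI allI impI)
  fix i assume i: "i < n"
  have "\<rho> i < n" using \<rho> i by (auto dest: bij_betw_apply)
  then show "\<exists>!j. j < n \<and> perm_matrix n \<rho> d i j \<noteq> 0"
    using i d by (intro ex1I[of _ "\<rho> i"]) (auto simp: perm_matrix_def split: if_splits)
next
  fix j assume j: "j < n"
  then obtain i where i: "i < n" "j = \<rho> i" using \<rho> by (auto simp: bij_betw_def)
  show "\<exists>!i. i < n \<and> perm_matrix n \<rho> d i j \<noteq> 0"
  proof (rule ex1I[of _ i])
    show "i < n \<and> perm_matrix n \<rho> d i j \<noteq> 0" using i j d by (simp add: perm_matrix_def)
    fix i' assume "i' < n \<and> perm_matrix n \<rho> d i' j \<noteq> 0"
    then have "i' < n" "\<rho> i' = \<rho> i" using i by (auto simp: perm_matrix_def split: if_splits)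
    then show "i' = i" using \<rho> i by (auto simp: bij_betw_def dest: inj_onD)
  qed
qed

lemma aut_transitiveI:
  fixes C :: "(nat \<Rightarrow> 'a::field) set"
  assumes "\<And>p q a b. p < n \<Longrightarrow> q < n \<Longrightarrow> a \<noteq> 0 \<Longrightarrow> b \<noteq> 0 \<Longrightarrow>
    \<exists>M\<in>Aut n C. vmul n (vscale a (unit_vec p)) M = vscale b (unit_vec q)"
  shows "aut_transitive n C"
  unfolding aut_transitive_def
proof (intro ballI impI)
  fix u v :: "nat \<Rightarrow> 'a"
  assume u: "u \<in> vecs n" and v: "v \<in> vecs n" and "hweight n u = 1 \<and> hweight n v = 1"
  then obtain p q where p: "p < n" "u p \<noteq> 0" and u_eq: "u = vscale (u p) (unit_vec p)"
    and q: "q < n" "v q \<noteq> 0" and v_eq: "v = vscale (v q) (unit_vec q)"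
    using hweight_eq_1_imp_vscale_unit_vec by blast
  then obtain M where "M \<in> Aut n C" "vmul n (vscale (u p) (unit_vec p)) M = vscale (v q) (unit_vec q)"
    using assms[OF p(1) q(1) p(2) q(2)] by blast
  then show "\<exists>M\<in>Aut n C. vmul n u M = v" using u_eq v_eq by auto
qed

section \<open>Linear codes of covering radius one\<close>

locale linear_code =
  fixes n :: nat and C :: "(nat \<Rightarrow> 'a::{field,finite}) set"
  assumes code_subset_vecs: "C \<subseteq> vecs n"
    and zero_in_code: "0 \<in> C"
    and add_in_code: "x \<in> C \<Longrightarrow> y \<in> C \<Longrightarrow> x + y \<in> C"
    and vscale_in_code: "x \<in> C \<Longrightarrow> vscale c x \<in> C"
begin

lemma diff_in_code: "x \<in> C \<Longrightarrow> y \<in> C \<Longrightarrow> x - y \<in> C"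
proof -
  assume "x \<in> C" "y \<in> C"
  then have "x + vscale (- 1) y \<in> C" by (intro add_in_code vscale_in_code)
  moreover have "x + vscale (- 1) y = x - y" by (simp add: vscale_def fun_eq_iff)
  ultimately show ?thesis by simp
qed

lemma finite_code: "finite C"
  using finite_subset[OF code_subset_vecs finite_vecs] .

lemma sum_in_code: "finite A \<Longrightarrow> (\<And>a. a \<in> A \<Longrightarrow> f a \<in> C) \<Longrightarrow> (\<Sum>a\<in>A. f a) \<in> C"
  by (induction A rule: finite_induct) (simp_all add: zero_in_code add_in_code)

lemma min_distance_eqI:
  assumes "\<And>z. z \<in> C \<Longrightarrow> z \<noteq> 0 \<Longrightarrow> d \<le> hweight n z"
    and "z \<in> C" "z \<noteq> 0" "hweight n z = d"
  shows "min_distance n C = d"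
  unfolding min_distance_def
proof (rule Min_eqI)
  have "{hdist n x y | x y. x \<in> C \<and> y \<in> C \<and> x \<noteq> y} \<subseteq> (\<lambda>(x, y). hdist n x y) ` (C \<times> C)"
    by auto
  then show "finite {hdist n x y | x y. x \<in> C \<and> y \<in> C \<and> x \<noteq> y}"
    by (rule finite_subset) (simp add: finite_code)
  show "d \<le> e" if "e \<in> {hdist n x y | x y. x \<in> C \<and> y \<in> C \<and> x \<noteq> y}" for e
    using that assms(1) diff_in_code by (auto simp: hdist_eq_hweight_diff)
  show "d \<in> {hdist n x y | x y. x \<in> C \<and> y \<in> C \<and> x \<noteq> y}"
    using assms(2-4) zero_in_code by (force simp: hdist_eq_hweight_diff)
qed

lemma dist_to_code_codeword: "x \<in> C \<Longrightarrow> dist_to_code n C x = 0"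
  unfolding dist_to_code_def
  by (rule Min_eqI) (auto simp: finite_code hdist_self intro: image_eqI[of _ _ x])

lemma dist_to_code_eq_1:
  assumes x: "x \<in> vecs n" "x \<notin> C" and near: "x - vscale a (unit_vec p) \<in> C"
  shows "dist_to_code n C x = 1"
  unfolding dist_to_code_def
proof (rule Min_eqI)
  show "finite (hdist n x ` C)" by (simp add: finite_code)
  have pos: "hdist n x c \<noteq> 0" if "c \<in> C" for c
    using that x hdist_eq_0_imp_eq code_subset_vecs by blast
  then show "1 \<le> e" if "e \<in> hdist n x ` C" for e
    using that by fastforce
  have "hdist n x (x - vscale a (unit_vec p)) = 1"
    using pos[OF near] hdist_le_1_if_diff_unit_vec[of n x a p] by linarith
  then show "1 \<in> hdist n x ` C" using near by (metis image_eqI)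
qed

lemma Aut_memI:
  assumes M: "monomial n M" and closed: "\<And>x. x \<in> C \<Longrightarrow> vmul n x M \<in> C"
  shows "M \<in> Aut n C"
proof -
  have "inj_on (\<lambda>x. vmul n x M) C"
    by (rule inj_onI) (use monomial_vmul_inj[OF M] code_subset_vecs in blast)
  then have "(\<lambda>x. vmul n x M) ` C = C"
    using closed by (intro endo_inj_surj finite_code) auto
  then show ?thesis using M by (simp add: Aut_def)
qed

lemma Aut_monomial: "M \<in> Aut n C \<Longrightarrow> monomial n M"
  by (simp add: Aut_def)

lemma Aut_vmul_in_code: "M \<in> Aut n C \<Longrightarrow> x \<in> C \<Longrightarrow> vmul n x M \<in> C"
  by (auto simp: Aut_def)

lemma Aut_vmul_notin_code:
  assumes M: "M \<in> Aut n C" and v: "v \<in> vecs n" "v \<notin> C"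
  shows "vmul n v M \<notin> C"
proof
  assume "vmul n v M \<in> C"
  then obtain c where c: "c \<in> C" "vmul n v M = vmul n c M" using M by (auto simp: Aut_def)
  then have "v = c" using monomial_vmul_inj[OF Aut_monomial[OF M] v(1)] code_subset_vecs by blast
  then show False using c(1) v(2) by simp
qed

lemma card_dist_translate:
  assumes w: "w \<in> C"
  shows "card {c \<in> C. hdist n (x - w) c = i} = card {c \<in> C. hdist n x c = i}"
proof (rule bij_betw_same_card)
  show "bij_betw (\<lambda>c. c + w) {c \<in> C. hdist n (x - w) c = i} {c \<in> C. hdist n x c = i}"
  proof (rule bij_betw_byWitness[where f' = "\<lambda>c. c - w"])
    show "(\<lambda>c. c + w) ` {c \<in> C. hdist n (x - w) c = i} \<subseteq> {c \<in> C. hdist n x c = i}"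
      using w add_in_code hdist_diff_right[of n x w "_ + w"] by auto
    show "(\<lambda>c. c - w) ` {c \<in> C. hdist n x c = i} \<subseteq> {c \<in> C. hdist n (x - w) c = i}"
      using w diff_in_code hdist_diff_right[of n x w] by auto
  qed auto
qed

lemma card_dist_Aut:
  assumes M: "M \<in> Aut n C"
  shows "card {c \<in> C. hdist n (vmul n u M) c = i} = card {c \<in> C. hdist n u c = i}"
proof -
  let ?f = "\<lambda>x. vmul n x M"
  have hd: "hdist n (?f x) (?f y) = hdist n x y" for x y
    by (rule monomial_hdist[OF Aut_monomial[OF M]])
  have inj: "inj_on ?f {c \<in> C. hdist n u c = i}"
    by (rule inj_onI) (use monomial_vmul_inj[OF Aut_monomial[OF M]] code_subset_vecs in blast)
  have img: "?f ` {c \<in> C. hdist n u c = i} = {c \<in> C. hdist n (?f u) c = i}"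
  proof
    show "?f ` {c \<in> C. hdist n u c = i} \<subseteq> {c \<in> C. hdist n (?f u) c = i}"
      using Aut_vmul_in_code[OF M] hd by auto
    show "{c \<in> C. hdist n (?f u) c = i} \<subseteq> ?f ` {c \<in> C. hdist n u c = i}"
    proof
      fix c' assume c': "c' \<in> {c \<in> C. hdist n (?f u) c = i}"
      then have "c' \<in> ?f ` C" using M by (simp add: Aut_def)
      then obtain c where c: "c \<in> C" "c' = ?f c" by blast
      then have "hdist n u c = i" using c' hd by simp
      then show "c' \<in> ?f ` {c \<in> C. hdist n u c = i}" using c by blast
    qed
  qed
  show ?thesis using card_image[OF inj] img by simp
qed

lemma coset_zero: "coset C 0 = C"
  by (simp add: coset_def)

lemma coset_subset: "y - z \<in> C \<Longrightarrow> coset C y \<subseteq> coset C z"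
proof
  fix u assume d: "y - z \<in> C" and "u \<in> coset C y"
  then obtain c where "c \<in> C" "u = y + c" by (auto simp: coset_def)
  then have "(y - z) + c \<in> C" "u = z + ((y - z) + c)" using d add_in_code by auto
  then show "u \<in> coset C z" unfolding coset_def by blast
qed

lemma coset_eq_iff: "coset C y = coset C z \<longleftrightarrow> y - z \<in> C"
proof
  assume "coset C y = coset C z"
  then have "y + 0 \<in> coset C z" using zero_in_code by (auto simp: coset_def)
  then show "y - z \<in> C" by (auto simp: coset_def)
next
  assume d: "y - z \<in> C"
  then have "z - y \<in> C" using diff_in_code[OF zero_in_code d] by simp
  then show "coset C y = coset C z" using coset_subset d by blast
qed

end

locale radius_one_code = linear_code +
  assumes noncodeword_near_codeword:
      "x \<in> vecs n \<Longrightarrow> x \<notin> C \<Longrightarrow> \<exists>p<n. \<exists>a. a \<noteq> 0 \<and> x - vscale a (unit_vec p) \<in> C"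
    and code_ne_vecs: "C \<noteq> vecs n"
begin

lemma dist_to_code_noncodeword:
  assumes "x \<in> vecs n" "x \<notin> C"
  shows "dist_to_code n C x = 1"
proof -
  obtain p a where "x - vscale a (unit_vec p) \<in> C"
    using noncodeword_near_codeword[OF assms] by blast
  then show ?thesis by (rule dist_to_code_eq_1[OF assms])
qed

lemma covering_radius_eq_1: "covering_radius n C = 1"
  unfolding covering_radius_def
proof (rule Max_eqI)
  show "finite (dist_to_code n C ` vecs n)" by (simp add: finite_vecs)
  show "e \<le> 1" if e: "e \<in> dist_to_code n C ` vecs n" for e
  proof -
    obtain x where "x \<in> vecs n" "e = dist_to_code n C x" using e by blast
    then show ?thesis
      using dist_to_code_codeword dist_to_code_noncodeword by (cases "x \<in> C") simp_all
  qed
  obtain x where "x \<in> vecs n" "x \<notin> C" using code_ne_vecs code_subset_vecs by blast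
  then show "1 \<in> dist_to_code n C ` vecs n"
    using dist_to_code_noncodeword by (metis image_eqI)
qed

context
  assumes transitive: "aut_transitive n C"
begin

lemma Aut_transitive_on_cosets:
  assumes v: "v \<in> vecs n" "v \<notin> C" and w: "w \<in> vecs n" "w \<notin> C"
  shows "\<exists>M\<in>Aut n C. vmul n v M - w \<in> C"
proof -
  obtain p a where p: "p < n" "a \<noteq> 0" and v_near: "v - vscale a (unit_vec p) \<in> C"
    using noncodeword_near_codeword[OF v] by blast
  obtain q b where q: "q < n" "b \<noteq> 0" and w_near: "w - vscale b (unit_vec q) \<in> C"
    using noncodeword_near_codeword[OF w] by blast
  have "\<exists>M\<in>Aut n C. vmul n (vscale a (unit_vec p)) M = vscale b (unit_vec q)"
    using transitive vscale_unit_vec_in_vecs[OF p(1)] vscale_unit_vec_in_vecs[OF q(1)]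
      hweight_vscale_unit_vec[OF p] hweight_vscale_unit_vec[OF q]
    unfolding aut_transitive_def by blast
  then obtain M where M: "M \<in> Aut n C"
    and moves: "vmul n (vscale a (unit_vec p)) M = vscale b (unit_vec q)" by blast
  have "vmul n v M - w = vmul n (v - vscale a (unit_vec p)) M - (w - vscale b (unit_vec q))"
    by (simp add: vmul_diff moves)
  also have "\<dots> \<in> C"
    using Aut_vmul_in_code[OF M v_near] w_near by (rule diff_in_code)
  finally show ?thesis using M by blast
qed

lemma coset_orbit_codeword:
  assumes "v \<in> C"
  shows "coset_orbit n C v = {C}"
proof -
  obtain x where "x \<in> vecs n" "x \<notin> C" using code_ne_vecs code_subset_vecs by blast
  then have "Aut n C \<noteq> {}" using Aut_transitive_on_cosets by blast
  moreover have "coset C (vmul n v M) = C" if "M \<in> Aut n C" for M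
    using Aut_vmul_in_code[OF that assms] coset_eq_iff[of _ 0] by (simp add: coset_zero)
  ultimately show ?thesis unfolding coset_orbit_def by blast
qed

lemma coset_orbit_noncodeword:
  assumes v: "v \<in> vecs n" "v \<notin> C"
  shows "coset_orbit n C v = {coset C w | w. w \<in> vecs n \<and> w \<notin> C}"
proof
  show "coset_orbit n C v \<subseteq> {coset C w | w. w \<in> vecs n \<and> w \<notin> C}"
  proof
    fix X assume "X \<in> coset_orbit n C v"
    then obtain M where "M \<in> Aut n C" "X = coset C (vmul n v M)" by (auto simp: coset_orbit_def)
    then show "X \<in> {coset C w | w. w \<in> vecs n \<and> w \<notin> C}"
      using Aut_vmul_notin_code[OF _ v] vmul_in_vecs by blast
  qed
  show "{coset C w | w. w \<in> vecs n \<and> w \<notin> C} \<subseteq> coset_orbit n C v"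
  proof
    fix X assume "X \<in> {coset C w | w. w \<in> vecs n \<and> w \<notin> C}"
    then obtain w where w: "w \<in> vecs n" "w \<notin> C" "X = coset C w" by blast
    then obtain M where M: "M \<in> Aut n C" and "vmul n v M - w \<in> C"
      using Aut_transitive_on_cosets[OF v] by blast
    then have "coset C (vmul n v M) = X" by (simp add: coset_eq_iff w(3))
    then show "X \<in> coset_orbit n C v" using M unfolding coset_orbit_def by blast
  qed
qed

lemma aut_transitive_imp_completely_transitive: "completely_transitive n C"
proof -
  let ?O = "{coset C w | w. w \<in> vecs n \<and> w \<notin> C}"
  obtain x where x: "x \<in> vecs n" "x \<notin> C" using code_ne_vecs code_subset_vecs by blast
  have "coset_orbit n C ` vecs n = {{C}, ?O}"
  proof
    show "coset_orbit n C ` vecs n \<subseteq> {{C}, ?O}"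
      using coset_orbit_codeword coset_orbit_noncodeword by auto
    have "{C} \<in> coset_orbit n C ` vecs n"
      by (rule rev_image_eqI[OF zero_in_vecs]) (simp add: coset_orbit_codeword[OF zero_in_code])
    moreover have "?O \<in> coset_orbit n C ` vecs n"
      by (rule rev_image_eqI[OF x(1)]) (simp add: coset_orbit_noncodeword[OF x])
    ultimately show "{{C}, ?O} \<subseteq> coset_orbit n C ` vecs n" by simp
  qed
  moreover have "coset C x \<noteq> C" using x(2) coset_eq_iff[of x 0] by (simp add: coset_zero)
  then have "{C} \<noteq> ?O" using x by blast
  ultimately show ?thesis unfolding completely_transitive_def covering_radius_eq_1 by simp
qed

lemma aut_transitive_imp_completely_regular: "completely_regular n C"
  unfolding completely_regular_def
proof (intro ballI impI allI)
  fix x y i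
  assume x: "x \<in> vecs n" and y: "y \<in> vecs n" and d: "dist_to_code n C x = dist_to_code n C y"
  have dist: "dist_to_code n C z = (if z \<in> C then 0 else 1)" if "z \<in> vecs n" for z
    using dist_to_code_codeword dist_to_code_noncodeword[OF that] by simp
  have same_side: "x \<in> C \<longleftrightarrow> y \<in> C"
    using d unfolding dist[OF x] dist[OF y] by (simp split: if_splits)
  show "card {c \<in> C. hdist n x c = i} = card {c \<in> C. hdist n y c = i}"
  proof (cases "x \<in> C")
    case True
    then have "card {c \<in> C. hdist n x c = i} = card {c \<in> C. hdist n 0 c = i}"
      using card_dist_translate[of x x i] by simp
    also have "\<dots> = card {c \<in> C. hdist n y c = i}"
      using True same_side card_dist_translate[of y y i] by simp
    finally show ?thesis .
  next
    case False
    then obtain M where M: "M \<in> Aut n C" and near: "vmul n x M - y \<in> C"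
      using Aut_transitive_on_cosets[OF x False y] same_side by blast
    have "card {c \<in> C. hdist n y c = i} = card {c \<in> C. hdist n (vmul n x M) c = i}"
      using card_dist_translate[OF near, of "vmul n x M" i] by simp
    also have "\<dots> = card {c \<in> C. hdist n x c = i}" by (rule card_dist_Aut[OF M])
    finally show ?thesis by simp
  qed
qed

end

end

section \<open>Transvections\<close>

definition mat_vec :: "nat \<Rightarrow> (nat \<Rightarrow> nat \<Rightarrow> 'a) \<Rightarrow> (nat \<Rightarrow> 'a) \<Rightarrow> nat \<Rightarrow> 'a::comm_semiring_0" where
  "mat_vec m t v = (\<lambda>i. if i < m then (\<Sum>l<m. t i l * v l) else 0)"

lemma mat_vec_in_vecs: "mat_vec m t v \<in> vecs m"
  by (simp add: mat_vec_def vecs_def)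

lemma mat_vec_zero: "mat_vec m t 0 = 0"
  by (simp add: mat_vec_def fun_eq_iff)

lemma mat_vec_diff_vscale: "mat_vec m t (u - vscale a w) = mat_vec m t u - vscale a (mat_vec m t w)"
  for u w :: "nat \<Rightarrow> 'a::field"
  by (auto simp: mat_vec_def fun_eq_iff vscale_def algebra_simps sum_subtractf sum_distrib_left)

lemma mat_vec_id: "v \<in> vecs m \<Longrightarrow> mat_vec m (\<lambda>i l. if i = l then 1 else 0) v = v"
  for v :: "nat \<Rightarrow> 'a::field"
  by (auto simp: mat_vec_def vecs_def fun_eq_iff if_distrib[of "\<lambda>c. c * _"] cong: if_cong)

lemma mat_vec_transvection:
  fixes w v :: "nat \<Rightarrow> 'a::field"
  assumes "w \<in> vecs m" "v \<in> vecs m"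
  shows "mat_vec m (\<lambda>i l. (if i = l then 1 else 0) + w i * \<phi> l) v = v + vscale (\<Sum>l<m. \<phi> l * v l) w"
proof
  fix i show "mat_vec m (\<lambda>i l. (if i = l then 1 else 0) + w i * \<phi> l) v i = (v + vscale (\<Sum>l<m. \<phi> l * v l) w) i"
    using assms by (cases "i < m")
      (simp_all add: mat_vec_def vecs_def vscale_def algebra_simps sum.distrib sum_distrib_left
        if_distrib[of "\<lambda>c. c * _"] if_distrib[of "\<lambda>c. _ * c"] cong: if_cong)
qed

lemma transvection_kernel:
  fixes w v :: "nat \<Rightarrow> 'a::field"
  assumes \<phi>w: "(\<Sum>l<m. \<phi> l * w l) = 0" and v: "v + vscale (\<Sum>l<m. \<phi> l * v l) w = 0"
  shows "v = 0"
proof -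
  define c where "c = (\<Sum>l<m. \<phi> l * v l)"
  have v_eq: "v l = - c * w l" for l
    using fun_cong[OF v[folded c_def], of l] by (simp add: vscale_def eq_neg_iff_add_eq_0)
  have "c = (\<Sum>l<m. \<phi> l * v l)" by (rule c_def)
  also have "\<dots> = (\<Sum>l<m. \<phi> l * (- c * w l))" by (simp only: v_eq)
  also have "\<dots> = - c * (\<Sum>l<m. \<phi> l * w l)" by (simp add: sum_distrib_left algebra_simps)
  finally have "c = 0" using \<phi>w by simp
  then show ?thesis by (simp add: v_eq fun_eq_iff)
qed

lemma ex_cross_term_nonzero:
  fixes u w :: "nat \<Rightarrow> 'a::field"
  assumes "u \<in> vecs m" "w \<in> vecs m" "u r \<noteq> 0" "\<forall>c. w \<noteq> vscale c u"
  shows "\<exists>s<m. u r * w s - u s * w r \<noteq> 0"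
proof (rule ccontr)
  assume "\<not> ?thesis"
  then have cross: "u r * w s = u s * w r" if "s < m" for s
    using that by auto
  have "w s = vscale (w r / u r) u s" for s
  proof (cases "s < m")
    case True
    then show ?thesis using cross[OF True] assms(3) by (simp add: vscale_def field_simps)
  next
    case False
    then show ?thesis using assms(1,2) by (simp add: vecs_def vscale_def)
  qed
  then have "w = vscale (w r / u r) u" by (rule ext)
  then show False using assms(4) by blast
qed

lemma ex_linear_form_separating:
  fixes u w :: "nat \<Rightarrow> 'a::field"
  assumes u: "u \<in> vecs m" "u \<noteq> 0" and w: "w \<in> vecs m" "\<forall>c. w \<noteq> vscale c u"
  shows "\<exists>\<phi>. (\<Sum>l<m. \<phi> l * u l) = 1 \<and> (\<Sum>l<m. \<phi> l * w l) = 0"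
proof -
  obtain r where r: "u r \<noteq> 0" using u(2) by (auto simp: fun_eq_iff)
  have "r < m"
  proof (rule ccontr)
    assume "\<not> r < m"
    then show False using u(1) r by (simp add: vecs_def)
  qed
  obtain s where s: "s < m" and D: "u r * w s - u s * w r \<noteq> 0"
    using ex_cross_term_nonzero[OF u(1) w(1) r w(2)] by blast
  define D where "D = u r * w s - u s * w r"
  have "r \<noteq> s" using D by auto
  define \<phi> where "\<phi> l = (if l = r then w s / D else 0) + (if l = s then - w r / D else 0)" for l
  have \<phi>: "(\<Sum>l<m. \<phi> l * x l) = (w s * x r - w r * x s) / D" for x
  proof -
    have "(\<Sum>l<m. \<phi> l * x l)
        = (\<Sum>l<m. (if l = r then w s / D * x r else 0) + (if l = s then - w r / D * x s else 0))"
      by (intro sum.cong) (auto simp: \<phi>_def algebra_simps)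
    also have "\<dots> = w s / D * x r - w r / D * x s"
      using \<open>r < m\<close> s by (simp add: sum.distrib)
    finally show ?thesis by (simp add: diff_divide_distrib)
  qed
  have "(\<Sum>l<m. \<phi> l * u l) = 1" using D by (simp add: \<phi> D_def mult.commute)
  moreover have "(\<Sum>l<m. \<phi> l * w l) = 0" by (simp add: \<phi> mult.commute)
  ultimately show ?thesis by blast
qed

lemma ex_invertible_mat_vec:
  fixes u u' :: "nat \<Rightarrow> 'a::field"
  assumes u: "u \<in> vecs m" "u \<noteq> 0" and u': "u' \<in> vecs m" "\<forall>c. u' \<noteq> vscale c u"
  shows "\<exists>t. (\<forall>v\<in>vecs m. mat_vec m t v = 0 \<longrightarrow> v = 0) \<and> mat_vec m t u = u'"
proof -
  define w where "w = u' - u"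
  have w: "w \<in> vecs m" unfolding w_def by (rule diff_in_vecs[OF u'(1) u(1)])
  have "w \<noteq> vscale c u" for c
  proof
    assume "w = vscale c u"
    then have "u' = vscale (1 + c) u" by (simp add: w_def vscale_def fun_eq_iff algebra_simps)
    then show False using u'(2) by blast
  qed
  then obtain \<phi> where \<phi>u: "(\<Sum>l<m. \<phi> l * u l) = 1" and \<phi>w: "(\<Sum>l<m. \<phi> l * w l) = 0"
    using ex_linear_form_separating[OF u w] by blast
  \<comment> \<open>the transvection v \<mapsto> v + \<phi>(v) w maps u to u + w = u'\<close>
  define t where "t i l = (if i = l then 1 else 0) + w i * \<phi> l" for i l
  have "mat_vec m t u = u + vscale (\<Sum>l<m. \<phi> l * u l) w"
    unfolding t_def by (rule mat_vec_transvection[OF w u(1)])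
  then have "mat_vec m t u = u'" by (simp add: \<phi>u w_def vscale_def fun_eq_iff)
  moreover have "v = 0" if "v \<in> vecs m" "mat_vec m t v = 0" for v
  proof -
    have "mat_vec m t v = v + vscale (\<Sum>l<m. \<phi> l * v l) w"
      unfolding t_def by (rule mat_vec_transvection[OF w that(1)])
    then have "v + vscale (\<Sum>l<m. \<phi> l * v l) w = 0" using that(2) by simp
    then show ?thesis by (rule transvection_kernel[OF \<phi>w])
  qed
  ultimately show ?thesis by blast
qed

section \<open>Parity-check matrices of Hamming codes\<close>

lemma card_field_ge_2: "CARD('a::{field,finite}) \<ge> 2"
proof -
  have "card {0::'a, 1} \<le> CARD('a)" by (rule card_mono) auto
  then show ?thesis by simp
qed

lemma pred_dvd_power_pred: "(q::nat) \<ge> 1 \<Longrightarrow> (q - 1) dvd (q ^ m - 1)"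
proof (induction m)
  case (Suc m)
  have "q ^ m \<ge> 1" using Suc.prems by simp
  then have eq: "q ^ Suc m - 1 = q * (q ^ m - 1) + (q - 1)"
    using Suc.prems by (simp add: algebra_simps diff_mult_distrib2)
  have "(q - 1) dvd q * (q ^ m - 1) + (q - 1)"
    by (intro dvd_add dvd_mult Suc.IH[OF Suc.prems] dvd_refl)
  then show ?case by (simp only: eq)
qed simp

locale hamming_pcm =
  fixes B :: "nat \<Rightarrow> nat \<Rightarrow> 'a::{field,finite}" and mb nb :: nat
  assumes hamming: "is_hamming_pcm mb nb B"
begin

definition col :: "nat \<Rightarrow> nat \<Rightarrow> 'a" where
  "col k = (\<lambda>i. if i < mb then B i k else 0)"

lemma col_in_vecs: "col k \<in> vecs mb"
  by (simp add: col_def vecs_def)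

lemma col_neq_0: "k < nb \<Longrightarrow> col k \<noteq> 0"
  using hamming unfolding is_hamming_pcm_def col_def fun_eq_iff by auto

lemma col_not_multiple: "k < nb \<Longrightarrow> k' < nb \<Longrightarrow> k \<noteq> k' \<Longrightarrow> col k \<noteq> vscale c (col k')"
proof
  assume "k < nb" "k' < nb" "k \<noteq> k'" and eq: "col k = vscale c (col k')"
  have "B i k = c * B i k'" if "i < mb" for i
    using fun_cong[OF eq, of i] that by (simp add: col_def vscale_def)
  then have "\<forall>i<mb. B i k = c * B i k'" by blast
  with hamming \<open>k < nb\<close> \<open>k' < nb\<close> \<open>k \<noteq> k'\<close> show False unfolding is_hamming_pcm_def by blast
qed

lemma two_le_mb: "2 \<le> mb"
  using hamming by (simp add: is_hamming_pcm_def)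

lemma card_nonzero_multiples_of_cols: "nb * (CARD('a) - 1) = CARD('a) ^ mb - 1"
proof -
  have "(CARD('a) - 1) dvd (CARD('a) ^ mb - 1)"
    using card_field_ge_2[where 'a='a] by (intro pred_dvd_power_pred) auto
  then show ?thesis using hamming by (simp add: is_hamming_pcm_def)
qed

lemma inj_on_multiples_of_cols:
  "inj_on (\<lambda>(k, c). vscale c (col k)) ({..<nb} \<times> (UNIV - {0}))"
proof (rule inj_onI)
  fix x y assume x: "x \<in> {..<nb} \<times> (UNIV - {0})" and y: "y \<in> {..<nb} \<times> (UNIV - {0})"
    and eq: "(\<lambda>(k, c). vscale c (col k)) x = (\<lambda>(k, c). vscale c (col k)) y"
  obtain k c k' c' where xy: "x = (k, c)" "y = (k', c')" by fastforce
  have k: "k < nb" "k' < nb" and c: "c \<noteq> 0" using x y xy by auto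
  have eq': "c * col k i = c' * col k' i" for i
    using fun_cong[OF eq, of i] xy by (simp add: vscale_def)
  have "col k = vscale (c' / c) (col k')"
  proof
    fix i show "col k i = vscale (c' / c) (col k') i"
      using eq'[of i] c by (simp add: vscale_def field_simps)
  qed
  then have "k = k'" using col_not_multiple k by blast
  obtain i where "col k i \<noteq> 0" using col_neq_0[OF k(1)] by (auto simp: fun_eq_iff)
  then have "c = c'" using eq'[of i] \<open>k = k'\<close> by simp
  then show "x = y" using xy \<open>k = k'\<close> by simp
qed

(* Counting, with q = CARD('a): the nb * (q - 1) nonzero multiples of columns are pairwise
   distinct, and q ^ mb - 1 is the number of nonzero vectors. *)
lemma nonzero_eq_multiple_of_col:
  assumes v: "v \<in> vecs mb" "v \<noteq> 0"
  shows "\<exists>k<nb. \<exists>c. c \<noteq> 0 \<and> v = vscale c (col k)"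
proof -
  let ?D = "{..<nb} \<times> (UNIV - {0::'a})" and ?g = "\<lambda>(k, c). vscale c (col k)"
  have "?g ` ?D \<subseteq> vecs mb - {0}"
  proof
    fix w assume "w \<in> ?g ` ?D"
    then obtain k c where k: "k < nb" "c \<noteq> 0" "w = vscale c (col k)" by auto
    obtain i where "col k i \<noteq> 0" using col_neq_0[OF k(1)] by (auto simp: fun_eq_iff)
    then have "w i \<noteq> 0" using k by (simp add: vscale_def)
    moreover have "w \<in> vecs mb" using k(3) by (simp add: vscale_in_vecs col_in_vecs)
    ultimately show "w \<in> vecs mb - {0}" by auto
  qed
  moreover have "card (?g ` ?D) = card (vecs mb - {0 :: nat \<Rightarrow> 'a})"
  proof -
    have "(0 :: nat \<Rightarrow> 'a) \<in> vecs mb" by (rule zero_in_vecs)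
    then have "card (vecs mb - {0 :: nat \<Rightarrow> 'a}) = CARD('a) ^ mb - 1"
      by (simp add: card_Diff_singleton finite_vecs card_vecs)
    then show ?thesis
      using card_image[OF inj_on_multiples_of_cols] card_nonzero_multiples_of_cols
      by (simp add: card_cartesian_product card_Diff_singleton)
  qed
  ultimately have "?g ` ?D = vecs mb - {0}"
    by (intro card_subset_eq) (simp_all add: finite_vecs)
  then obtain x where "x \<in> ?D" "v = ?g x" using v by blast
  then show ?thesis by (cases x) auto
qed

definition unit_col :: "nat \<Rightarrow> nat" where
  "unit_col i = (SOME k. k < nb \<and> B i k \<noteq> 0 \<and> col k = vscale (B i k) (unit_vec i))"

lemma unit_col:
  assumes i: "i < mb"
  shows "unit_col i < nb" "B i (unit_col i) \<noteq> 0"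
    and "col (unit_col i) = vscale (B i (unit_col i)) (unit_vec i)"
proof -
  have "unit_vec i \<in> vecs mb" "(unit_vec i :: nat \<Rightarrow> 'a) \<noteq> 0"
    using i by (auto simp: vecs_def unit_vec_def fun_eq_iff)
  then obtain k c where k: "k < nb" "c \<noteq> 0" "unit_vec i = vscale c (col k)"
    using nonzero_eq_multiple_of_col by blast
  then have "col k = vscale (1 / c) (unit_vec i)" by (auto simp: vscale_def fun_eq_iff)
  moreover have "B i k = 1 / c" using fun_cong[OF calculation, of i] i k(2)
    by (simp add: col_def vscale_def unit_vec_def)
  ultimately have "\<exists>k. k < nb \<and> B i k \<noteq> 0 \<and> col k = vscale (B i k) (unit_vec i)"
    using k by auto
  then have "unit_col i < nb \<and> B i (unit_col i) \<noteq> 0 \<and>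
      col (unit_col i) = vscale (B i (unit_col i)) (unit_vec i)"
    unfolding unit_col_def by (rule someI_ex)
  then show "unit_col i < nb" "B i (unit_col i) \<noteq> 0"
    and "col (unit_col i) = vscale (B i (unit_col i)) (unit_vec i)" by blast+
qed

lemma B_unit_col: "i < mb \<Longrightarrow> i' < mb \<Longrightarrow> B i' (unit_col i) = (if i' = i then B i (unit_col i) else 0)"
  using fun_cong[OF unit_col(3), of i i'] by (simp add: col_def vscale_def unit_vec_def)

lemma inj_on_unit_col: "inj_on unit_col {..<mb}"
proof (rule inj_onI)
  fix i i' assume "i \<in> {..<mb}" "i' \<in> {..<mb}" "unit_col i = unit_col i'"
  then show "i = i'" using B_unit_col[of i' i] unit_col(2)[of i] by (auto split: if_splits)
qed

lemma nb_pos: "0 < nb"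
  using unit_col(1)[of 0] two_le_mb by simp

definition permutes_cols :: "(nat \<Rightarrow> nat \<Rightarrow> 'a) \<Rightarrow> (nat \<Rightarrow> nat) \<Rightarrow> (nat \<Rightarrow> 'a) \<Rightarrow> bool" where
  "permutes_cols t \<pi> c \<longleftrightarrow> bij_betw \<pi> {..<nb} {..<nb} \<and>
     (\<forall>k<nb. c k \<noteq> 0 \<and> mat_vec mb t (col k) = vscale (c k) (col (\<pi> k)))"

lemma ex_permutes_cols:
  assumes inj: "\<forall>v\<in>vecs mb. mat_vec mb t v = 0 \<longrightarrow> v = 0"
  shows "\<exists>\<pi> c. permutes_cols t \<pi> c"
proof -
  have "\<forall>k\<in>{..<nb}. \<exists>k'. \<exists>c. k' < nb \<and> c \<noteq> 0 \<and> mat_vec mb t (col k) = vscale c (col k')"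
  proof
    fix k assume "k \<in> {..<nb}"
    then have "mat_vec mb t (col k) \<noteq> 0" using inj col_in_vecs col_neq_0 by blast
    then show "\<exists>k'. \<exists>c. k' < nb \<and> c \<noteq> 0 \<and> mat_vec mb t (col k) = vscale c (col k')"
      using nonzero_eq_multiple_of_col[OF mat_vec_in_vecs] by blast
  qed
  from bchoice[OF this] obtain \<pi> where
    "\<forall>k\<in>{..<nb}. \<exists>c. \<pi> k < nb \<and> c \<noteq> 0 \<and> mat_vec mb t (col k) = vscale c (col (\<pi> k))" ..
  from bchoice[OF this] obtain c where
    pc: "\<forall>k\<in>{..<nb}. \<pi> k < nb \<and> c k \<noteq> 0 \<and> mat_vec mb t (col k) = vscale (c k) (col (\<pi> k))" ..
  have "inj_on \<pi> {..<nb}"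
  proof (rule inj_onI)
    fix k k' assume k: "k \<in> {..<nb}" "k' \<in> {..<nb}" and eq: "\<pi> k = \<pi> k'"
    show "k = k'"
    proof (rule ccontr)
      assume ne: "k \<noteq> k'"
      have "mat_vec mb t (col k - vscale (c k / c k') (col k'))
          = mat_vec mb t (col k) - vscale (c k / c k') (mat_vec mb t (col k'))"
        by (rule mat_vec_diff_vscale)
      also have "\<dots> = 0" using pc k eq by (simp add: vscale_def fun_eq_iff)
      finally have "col k - vscale (c k / c k') (col k') = 0"
        using inj diff_in_vecs[OF col_in_vecs vscale_in_vecs[OF col_in_vecs]] by blast
      then show False using col_not_multiple k ne by simp
    qed
  qed
  moreover have "\<pi> ` {..<nb} \<subseteq> {..<nb}" using pc by auto
  ultimately have "bij_betw \<pi> {..<nb} {..<nb}" by (simp add: bij_betw_def endo_inj_surj)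
  then show ?thesis using pc unfolding permutes_cols_def by blast
qed

lemma permutes_cols_apply:
  assumes \<pi>: "permutes_cols t \<pi> c" and j: "j < nb" "j' < nb" and tj: "mat_vec mb t (col j) = col j'"
  shows "\<pi> j = j'"
proof (rule ccontr)
  assume "\<pi> j \<noteq> j'"
  moreover have "\<pi> j < nb" using \<pi> j(1) by (auto simp: permutes_cols_def dest: bij_betw_apply)
  moreover have "col j' = vscale (c j) (col (\<pi> j))" using \<pi> j(1) tj by (simp add: permutes_cols_def)
  ultimately show False using col_not_multiple j(2) by metis
qed

lemma ex_permutes_cols_moving:
  assumes j: "j < nb" "j' < nb"
  shows "\<exists>t \<pi> c. permutes_cols t \<pi> c \<and> \<pi> j = j'"
proof -
  obtain t where inj: "\<forall>v\<in>vecs mb. mat_vec mb t v = 0 \<longrightarrow> v = 0"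
    and tj: "mat_vec mb t (col j) = col j'"
  proof (cases "j = j'")
    case True
    show thesis
      by (rule that[of "\<lambda>i l. if i = l then 1 else 0"]) (simp_all add: mat_vec_id col_in_vecs True)
  next
    case False
    then have "\<forall>c. col j' \<noteq> vscale c (col j)" using col_not_multiple j by blast
    then show thesis
      using ex_invertible_mat_vec[OF col_in_vecs col_neq_0[OF j(1)] col_in_vecs] that by blast
  qed
  obtain \<pi> c where "permutes_cols t \<pi> c" using ex_permutes_cols[OF inj] by blast
  then show ?thesis using permutes_cols_apply[OF _ j tj] by blast
qed

end

section \<open>Generator matrices of repetition codes\<close>

lemma row_space_repetition_code_rows_constant:
  assumes na: "1 \<le> na" and rs: "row_space ra na A = repetition_code na" and i: "i < ra"
  shows "\<forall>s<na. A i s = A i 0"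
proof -
  define v where "v = (\<lambda>j. if j < na then A i j else 0)"
  have "\<forall>j. v j = (if j < na then (\<Sum>i'<ra. (if i' = i then 1 else 0) * A i' j) else 0)"
    by (simp only: v_def sum_delta_mult[OF i] simp_thms)
  then have "v \<in> row_space ra na A"
    unfolding row_space_def by (intro CollectI exI[of _ "\<lambda>i'. if i' = i then 1 else 0"])
  then have "v \<in> repetition_code na" using rs by simp
  then obtain c where c: "\<forall>j. v j = (if j < na then c else 0)"
    unfolding repetition_code_def by blast
  have "A i s = c" if "s < na" for s using c[rule_format, of s] that by (simp add: v_def)
  then show ?thesis using na by simp
qed

lemma row_space_repetition_code_nonempty:
  fixes A :: "nat \<Rightarrow> nat \<Rightarrow> 'a::comm_ring_1"
  assumes na: "1 \<le> na" and rs: "row_space ra na A = repetition_code na"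
  shows "0 < ra"
proof (rule ccontr)
  assume "\<not> 0 < ra"
  have "(\<lambda>j. if j < na then (1::'a) else 0) \<in> repetition_code na"
    unfolding repetition_code_def by (intro CollectI exI[of _ 1] allI) (rule refl)
  then have "(\<lambda>j. if j < na then (1::'a) else 0) \<in> row_space ra na A" by (simp only: rs)
  then have "\<exists>c. \<forall>j. (if j < na then (1::'a) else 0) = (if j < na then (\<Sum>i<ra. c i * A i j) else 0)"
    unfolding row_space_def by (rule CollectD)
  then obtain c where c: "\<forall>j. (if j < na then (1::'a) else 0) = (if j < na then (\<Sum>i<ra. c i * A i j) else 0)" ..
  have "0 < na" using na by simp
  then have "(1::'a) = (\<Sum>i<ra. c i * A i 0)" using spec[OF c, of 0] by simp
  then show False using \<open>\<not> 0 < ra\<close> by simp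
qed

lemma repetition_generator_matrix:
  fixes A :: "nat \<Rightarrow> nat \<Rightarrow> 'a::field"
  assumes na: "1 \<le> na" and G: "is_generator_matrix ra na A (repetition_code na)"
  shows "ra = 1" "A 0 0 \<noteq> 0" "\<forall>s<na. A 0 s = A 0 0"
proof -
  have rs: "row_space ra na A = repetition_code na"
    and ind: "\<And>c. (\<forall>j<na. (\<Sum>i<ra. c i * A i j) = 0) \<Longrightarrow> (\<forall>i<ra. c i = 0)"
    using G by (auto simp: is_generator_matrix_def)
  note row_const = row_space_repetition_code_rows_constant[OF na rs]
  have "0 < ra" by (rule row_space_repetition_code_nonempty[OF na rs])
  then show r0: "\<forall>s<na. A 0 s = A 0 0" by (rule row_const)
  show "A 0 0 \<noteq> 0"
  proof
    assume "A 0 0 = 0"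
    have "(\<Sum>i<ra. (if i = 0 then 1 else 0) * A i j) = 0" if j: "j < na" for j
    proof -
      have "(\<Sum>i<ra. (if i = 0 then 1 else 0) * A i j) = A 0 j"
        by (rule sum_delta_mult[OF \<open>0 < ra\<close>])
      then show ?thesis using r0[rule_format, OF j] \<open>A 0 0 = 0\<close> by simp
    qed
    then have "\<forall>i<ra. (if i = 0 then (1::'a) else 0) = 0" by (intro ind allI impI)
    then show False using \<open>0 < ra\<close> by auto
  qed
  show "ra = 1"
  proof (rule ccontr)
    assume "ra \<noteq> 1"
    then have "1 < ra" using \<open>0 < ra\<close> by simp
    \<comment> \<open>rows 0 and 1 are constant, so a nontrivial combination of them vanishes\<close>
    define c where "c i = (if i = 0 then 1 else 0) * A 1 0 - (if i = 1 then 1 else 0) * A 0 0" for i :: nat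
    have "(\<Sum>i<ra. c i * A i j) = 0" if j: "j < na" for j
    proof -
      have "(\<Sum>i<ra. c i * A i j) = (\<Sum>i<ra. (if i = 0 then 1 else 0) * (A 1 0 * A i j))
          - (\<Sum>i<ra. (if i = 1 then 1 else 0) * (A 0 0 * A i j))"
        by (simp add: c_def sum_subtractf[symmetric] algebra_simps)
      also have "\<dots> = A 1 0 * A 0 j - A 0 0 * A 1 j"
        by (simp only: sum_delta_mult[OF \<open>0 < ra\<close>] sum_delta_mult[OF \<open>1 < ra\<close>])
      finally show ?thesis
        using r0[rule_format, OF j] row_const[OF \<open>1 < ra\<close>, rule_format, OF j] by simp
    qed
    then have "c 1 = 0" using ind \<open>1 < ra\<close> by blast
    then show False using \<open>A 0 0 \<noteq> 0\<close> by (simp add: c_def)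
  qed
qed

section \<open>The code with parity-check matrix A \<otimes> B\<close>

interpretation vec: vector_space "vscale :: 'a::field \<Rightarrow> (nat \<Rightarrow> 'a) \<Rightarrow> (nat \<Rightarrow> 'a)"
  by unfold_locales (auto simp: vscale_def fun_eq_iff algebra_simps)

locale hamming_repetition = hamming_pcm +
  fixes na :: nat
  assumes na_pos: "1 \<le> na"
begin

abbreviation N :: nat where "N \<equiv> na * nb"

(* Coordinate j lies in block j div nb and is checked by column j mod nb of B. *)
definition syndrome :: "(nat \<Rightarrow> 'a) \<Rightarrow> nat \<Rightarrow> 'a" where
  "syndrome x = (\<lambda>i. if i < mb then (\<Sum>j<N. B i (j mod nb) * x j) else 0)"

definition code :: "(nat \<Rightarrow> 'a) set" where
  "code = {x \<in> vecs N. syndrome x = 0}"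

lemma syndrome_zero: "syndrome 0 = 0"
  and syndrome_add: "syndrome (x + y) = syndrome x + syndrome y"
  and syndrome_diff: "syndrome (x - y) = syndrome x - syndrome y"
  and syndrome_vscale: "syndrome (vscale c x) = vscale c (syndrome x)"
  by (auto simp: syndrome_def fun_eq_iff vscale_def algebra_simps sum.distrib sum_subtractf
      sum_distrib_left)

lemma syndrome_sum: "finite A \<Longrightarrow> syndrome (\<Sum>a\<in>A. f a) = (\<Sum>a\<in>A. syndrome (f a))"
proof (induction A rule: finite_induct)
  case empty show ?case by (simp only: sum.empty syndrome_zero)
next
  case (insert a A) then show ?case by (simp only: sum.insert[OF insert.hyps] syndrome_add)
qed

lemma syndrome_in_vecs: "syndrome x \<in> vecs mb"
  by (simp add: syndrome_def vecs_def)

lemma syndrome_unit_vec: "p < N \<Longrightarrow> syndrome (unit_vec p) = col (p mod nb)"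
  by (simp add: syndrome_def col_def fun_eq_iff unit_vec_def if_distrib[of "\<lambda>c. _ * c"] cong: if_cong)

lemma pcm_code_kron_repetition:
  fixes A :: "nat \<Rightarrow> nat \<Rightarrow> 'a"
  assumes a: "A 0 0 \<noteq> 0" "\<forall>s<na. A 0 s = A 0 0"
  shows "pcm_code mb N (kron mb nb A B) = code"
proof -
  have "(\<Sum>j<N. kron mb nb A B i j * x j) = A 0 0 * syndrome x i" if i: "i < mb" for i x
  proof -
    have "kron mb nb A B i j = A 0 0 * B i (j mod nb)" if "j < N" for j
      using i a(2) that nb_pos by (simp add: kron_def less_mult_imp_div_less)
    then have "(\<Sum>j<N. kron mb nb A B i j * x j) = (\<Sum>j<N. A 0 0 * (B i (j mod nb) * x j))"
      by (intro sum.cong) simp_all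
    then show ?thesis using i by (simp add: syndrome_def sum_distrib_left)
  qed
  then have "(\<forall>i<mb. (\<Sum>j<N. kron mb nb A B i j * x j) = 0) \<longleftrightarrow> syndrome x = 0" for x
    using a(1) by (auto simp: fun_eq_iff syndrome_def)
  then show ?thesis by (auto simp: pcm_code_def code_def)
qed

lemma nb_le_N: "nb \<le> N"
  using na_pos by simp

sublocale linear_code N code
  by unfold_locales
    (auto simp: code_def syndrome_zero syndrome_add syndrome_vscale vscale_zero zero_in_vecs
      add_in_vecs vscale_in_vecs)

lemma noncodeword_near_codeword:
  assumes x: "x \<in> vecs N" "x \<notin> code"
  shows "\<exists>p<N. \<exists>a. a \<noteq> 0 \<and> x - vscale a (unit_vec p) \<in> code"
proof -
  have "syndrome x \<noteq> 0" using x by (simp add: code_def)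
  then obtain k a where k: "k < nb" "a \<noteq> 0" "syndrome x = vscale a (col k)"
    using nonzero_eq_multiple_of_col syndrome_in_vecs by blast
  then have "k < N" using nb_le_N by linarith
  then have "syndrome (x - vscale a (unit_vec k)) = 0"
    using k by (simp add: syndrome_diff syndrome_vscale syndrome_unit_vec)
  moreover have "x - vscale a (unit_vec k) \<in> vecs N"
    using x(1) vscale_unit_vec_in_vecs[OF \<open>k < N\<close>] by (rule diff_in_vecs)
  ultimately show ?thesis using k \<open>k < N\<close> by (auto simp: code_def)
qed

lemma unit_vec_notin_code: "p < N \<Longrightarrow> unit_vec p \<notin> code"
  using col_neq_0[of "p mod nb"] nb_pos by (simp add: code_def syndrome_unit_vec)

sublocale radius_one_code N code
proof
  show "\<exists>p<N. \<exists>a. a \<noteq> 0 \<and> x - vscale a (unit_vec p) \<in> code" if "x \<in> vecs N" "x \<notin> code" for x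
    using noncodeword_near_codeword that .
  have "0 < N" using nb_pos na_pos by simp
  then have "unit_vec 0 \<in> vecs N" "unit_vec 0 \<notin> code"
    using unit_vec_notin_code[of 0] by (simp_all add: vecs_def unit_vec_def)
  then show "code \<noteq> vecs N" by blast
qed

lemma syndrome_support:
  assumes "z \<in> vecs N" "i < mb"
  shows "syndrome z i = (\<Sum>j | j < N \<and> z j \<noteq> 0. B i (j mod nb) * z j)"
proof -
  have "(\<Sum>j<N. B i (j mod nb) * z j) = (\<Sum>j | j < N \<and> z j \<noteq> 0. B i (j mod nb) * z j)"
    by (rule sum.mono_neutral_right) auto
  then show ?thesis using assms by (simp add: syndrome_def)
qed

lemma codeword_hweight_neq_1:
  assumes z: "z \<in> code"
  shows "hweight N z \<noteq> 1"
proof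
  assume "hweight N z = 1"
  then obtain p where p: "{j. j < N \<and> z j \<noteq> 0} = {p}"
    unfolding hweight_def by (rule card_1_singletonE)
  have "B i (p mod nb) * z p = 0" if "i < mb" for i
    using syndrome_support[OF _ that, of z] z p by (simp add: code_def)
  then have "col (p mod nb) = 0" using p by (auto simp: col_def fun_eq_iff)
  then show False using col_neq_0 nb_pos by simp
qed

lemma codeword_hweight_neq_2:
  assumes na: "na = 1" and z: "z \<in> code"
  shows "hweight N z \<noteq> 2"
proof
  assume "hweight N z = 2"
  then obtain p p' where p: "{j. j < N \<and> z j \<noteq> 0} = {p, p'}" "p \<noteq> p'"
    unfolding hweight_def card_2_iff by blast
  then have pp: "p < nb" "z p \<noteq> 0" "p' < nb" "z p' \<noteq> 0" using na by auto
  have "B i p * z p + B i p' * z p' = 0" if "i < mb" for i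
    using syndrome_support[OF _ that, of z] z p pp by (simp add: code_def)
  then have "col p = vscale (- z p' / z p) (col p')"
    using pp by (auto simp: col_def vscale_def fun_eq_iff field_simps eq_neg_iff_add_eq_0)
  then show False using col_not_multiple pp p(2) by blast
qed

lemma min_distance_eq_2:
  assumes "1 < na"
  shows "min_distance N code = 2"
proof (rule min_distance_eqI)
  show "2 \<le> hweight N z" if "z \<in> code" "z \<noteq> 0" for z
    using codeword_hweight_neq_1[OF that(1)] hweight_eq_0_iff[of z N] that code_subset_vecs by force
  define z :: "nat \<Rightarrow> 'a" where "z = unit_vec 0 - unit_vec nb"
  have nbN: "nb < N" using assms nb_pos by simp
  then have "z \<in> vecs N" by (simp add: z_def vecs_def unit_vec_def)
  moreover have "syndrome z = 0" using nbN by (simp add: z_def syndrome_diff syndrome_unit_vec)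
  ultimately show "z \<in> code" by (simp add: code_def)
  show "z \<noteq> 0" using nb_pos by (auto simp: z_def unit_vec_def fun_eq_iff)
  have "{j. j < N \<and> z j \<noteq> 0} = {0, nb}" using nbN nb_pos by (auto simp: z_def unit_vec_def)
  then show "hweight N z = 2" using nb_pos by (simp add: hweight_def)
qed

lemma ex_codeword_hweight_3:
  assumes na: "na = 1"
  shows "\<exists>z\<in>code. z \<noteq> 0 \<and> hweight N z = 3"
proof -
  define q0 q1 where "q0 = unit_col 0" and "q1 = unit_col 1"
  have m: "0 < mb" "1 < mb" using two_le_mb by auto
  note u0 = unit_col[OF m(1), folded q0_def] and u1 = unit_col[OF m(2), folded q1_def]
  have "q0 \<noteq> q1" using inj_on_unit_col m by (auto simp: q0_def q1_def inj_on_def)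
  have "unit_vec 0 + unit_vec 1 \<in> (vecs mb :: (nat \<Rightarrow> 'a) set)"
    "unit_vec 0 + unit_vec 1 \<noteq> (0 :: nat \<Rightarrow> 'a)"
    using m by (auto simp: vecs_def unit_vec_def fun_eq_iff)
  then obtain r c where r: "r < nb" "c \<noteq> 0" and sum_col: "unit_vec 0 + unit_vec 1 = vscale c (col r)"
    using nonzero_eq_multiple_of_col by blast
  have "r \<noteq> q0" using fun_cong[OF sum_col, of 1] u0(3) by (auto simp: vscale_def unit_vec_def)
  have "r \<noteq> q1" using fun_cong[OF sum_col, of 0] u1(3) by (auto simp: vscale_def unit_vec_def)
  define z where "z = vscale (1 / B 0 q0) (unit_vec q0) + vscale (1 / B 1 q1) (unit_vec q1)
    - vscale c (unit_vec r)"
  have "vscale (1 / B 0 q0) (col q0) = unit_vec 0" "vscale (1 / B 1 q1) (col q1) = unit_vec 1"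
    using u0(2,3) u1(2,3) by (simp_all add: vscale_def fun_eq_iff)
  moreover have lt: "q0 < N" "q1 < N" "r < N" using na u0(1) u1(1) r(1) by simp_all
  ultimately have "syndrome z = unit_vec 0 + unit_vec 1 - vscale c (col r)"
    using u0(1) u1(1) r(1) by (simp add: z_def syndrome_add syndrome_diff syndrome_vscale syndrome_unit_vec)
  then have "syndrome z = 0" by (simp only: sum_col diff_self)
  moreover have "z \<in> vecs N"
    using lt by (simp add: z_def add_in_vecs diff_in_vecs vscale_unit_vec_in_vecs)
  ultimately have "z \<in> code" by (simp add: code_def)
  have z_at: "z q0 \<noteq> 0" "z q1 \<noteq> 0" "z r \<noteq> 0"
    using u0(2) u1(2) r(2) \<open>q0 \<noteq> q1\<close> \<open>r \<noteq> q0\<close> \<open>r \<noteq> q1\<close>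
    by (auto simp: z_def vscale_def unit_vec_def)
  then have "z \<noteq> 0" by auto
  have "{j. j < N \<and> z j \<noteq> 0} = {q0, q1, r}"
    using z_at lt by (auto simp: z_def vscale_def unit_vec_def split: if_splits)
  then have "hweight N z = 3"
    using \<open>q0 \<noteq> q1\<close> \<open>r \<noteq> q0\<close> \<open>r \<noteq> q1\<close> by (simp add: hweight_def)
  then show ?thesis using \<open>z \<in> code\<close> \<open>z \<noteq> 0\<close> by blast
qed

lemma min_distance_eq_3:
  assumes na: "na = 1"
  shows "min_distance N code = 3"
proof -
  have "3 \<le> hweight N z" if "z \<in> code" "z \<noteq> 0" for z
    using codeword_hweight_neq_1[OF that(1)] codeword_hweight_neq_2[OF na that(1)]
      hweight_eq_0_iff[of z N] that code_subset_vecs by force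
  then show ?thesis using ex_codeword_hweight_3[OF na] min_distance_eqI by blast
qed

definition check_positions :: "nat set" where
  "check_positions = unit_col ` {..<mb}"

definition info_positions :: "nat set" where
  "info_positions = {..<N} - check_positions"

lemma check_positions_subset: "check_positions \<subseteq> {..<N}"
proof
  fix j assume "j \<in> check_positions"
  then obtain i where "i < mb" "j = unit_col i" by (auto simp: check_positions_def)
  then show "j \<in> {..<N}" using unit_col(1)[of i] nb_le_N by (simp add: less_le_trans)
qed

lemma finite_info_positions: "finite info_positions"
  by (simp add: info_positions_def)

lemma card_info_positions: "card info_positions = N - mb"
proof -
  have "card check_positions = mb"
    using inj_on_unit_col by (simp add: check_positions_def card_image)
  then show ?thesis
    using check_positions_subset by (simp add: info_positions_def card_Diff_subset finite_subset)
qed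

(* The codeword equal to 1 at the information position k: the check columns, multiples of
   unit vectors, cancel its syndrome. *)
definition info_vec :: "nat \<Rightarrow> nat \<Rightarrow> 'a" where
  "info_vec k = unit_vec k - (\<Sum>i<mb. vscale (B i (k mod nb) / B i (unit_col i)) (unit_vec (unit_col i)))"

lemma col_eq_sum_unit_vec: "col k = (\<Sum>i<mb. vscale (B i k) (unit_vec i))"
  by (simp add: fun_eq_iff sum_fun_apply col_def vscale_def unit_vec_def if_distrib[of "\<lambda>c. _ * c"]
      cong: if_cong)

lemma info_vec_in_code:
  assumes k: "k < N"
  shows "info_vec k \<in> code"
proof -
  have unit_col_lt: "unit_col i < N" if "i < mb" for i
    using unit_col(1)[OF that] nb_le_N by linarith
  have "syndrome (\<Sum>i<mb. vscale (B i (k mod nb) / B i (unit_col i)) (unit_vec (unit_col i)))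
      = (\<Sum>i<mb. vscale (B i (k mod nb) / B i (unit_col i)) (col (unit_col i)))"
    using unit_col(1) by (simp add: syndrome_sum syndrome_vscale syndrome_unit_vec unit_col_lt)
  also have "\<dots> = (\<Sum>i<mb. vscale (B i (k mod nb)) (unit_vec i))"
    using unit_col(2,3) by (intro sum.cong refl) (simp add: vscale_def fun_eq_iff)
  also have "\<dots> = col (k mod nb)" by (simp add: col_eq_sum_unit_vec)
  finally have "syndrome (info_vec k) = 0"
    using k by (simp add: info_vec_def syndrome_diff syndrome_unit_vec)
  moreover have "info_vec k \<in> vecs N"
    unfolding info_vec_def using k unit_col_lt
    by (intro diff_in_vecs sum_in_vecs vscale_in_vecs unit_vec_in_vecs) (simp_all add: unit_col_lt)
  ultimately show ?thesis by (simp add: code_def)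
qed

lemma info_vec_apply:
  assumes "k' \<in> info_positions"
  shows "info_vec k k' = (if k' = k then 1 else 0)"
proof -
  have "\<forall>i<mb. k' \<noteq> unit_col i"
    using assms by (auto simp: info_positions_def check_positions_def)
  then show ?thesis by (simp add: info_vec_def sum_fun_apply vscale_def unit_vec_def)
qed

lemma codeword_eq_0_if_info_zero:
  assumes y: "y \<in> code" and info: "\<And>k. k \<in> info_positions \<Longrightarrow> y k = 0"
  shows "y = 0"
proof -
  have check: "y (unit_col i) = 0" if i: "i < mb" for i
  proof -
    have summand: "B i (unit_col i' mod nb) * y (unit_col i')
        = (if i' = i then B i (unit_col i) * y (unit_col i) else 0)" if i': "i' < mb" for i'
    proof (cases "i' = i")
      case True
      then show ?thesis using unit_col(1)[OF i'] by simp
    next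
      case False
      then show ?thesis using B_unit_col[OF i' i] unit_col(1)[OF i'] by simp
    qed
    have "0 = syndrome y i" using y by (simp add: code_def)
    also have "\<dots> = (\<Sum>j<N. B i (j mod nb) * y j)" using i by (simp add: syndrome_def)
    also have "\<dots> = (\<Sum>j\<in>check_positions. B i (j mod nb) * y j)"
    proof (rule sum.mono_neutral_right)
      show "\<forall>j\<in>{..<N} - check_positions. B i (j mod nb) * y j = 0"
        using info by (simp add: info_positions_def)
    qed (simp_all add: check_positions_subset)
    also have "\<dots> = (\<Sum>i'<mb. B i (unit_col i' mod nb) * y (unit_col i'))"
      unfolding check_positions_def using inj_on_unit_col by (simp add: sum.reindex)
    also have "\<dots> = (\<Sum>i'<mb. if i' = i then B i (unit_col i) * y (unit_col i) else 0)"
      using summand by (intro sum.cong) simp_all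
    also have "\<dots> = B i (unit_col i) * y (unit_col i)" using i by simp
    finally show ?thesis using unit_col(2)[OF i] by simp
  qed
  show ?thesis
  proof
    fix j show "y j = 0 j"
    proof (cases "j \<in> check_positions")
      case True
      then show ?thesis using check by (auto simp: check_positions_def)
    next
      case False
      then show ?thesis using info y code_subset_vecs
        by (cases "j < N") (auto simp: info_positions_def vecs_def)
    qed
  qed
qed

lemma codeword_eq_sum_info_vec:
  assumes x: "x \<in> code"
  shows "x = (\<Sum>k\<in>info_positions. vscale (x k) (info_vec k))"
proof -
  have "(\<Sum>k\<in>info_positions. vscale (x k) (info_vec k)) \<in> code"
    using info_vec_in_code finite_info_positions
    by (intro sum_in_code vscale_in_code) (auto simp: info_positions_def)
  moreover have "(\<Sum>k\<in>info_positions. vscale (x k) (info_vec k)) k0 = x k0"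
    if "k0 \<in> info_positions" for k0
    using that by (simp add: sum_fun_apply vscale_def info_vec_apply if_distrib[of "\<lambda>c. _ * c"]
        info_positions_def cong: if_cong)
  ultimately have "x - (\<Sum>k\<in>info_positions. vscale (x k) (info_vec k)) = 0"
    using x by (intro codeword_eq_0_if_info_zero diff_in_code) auto
  then show ?thesis by simp
qed

lemma inj_on_info_vec: "inj_on info_vec info_positions"
proof (rule inj_onI)
  fix k k' assume "k \<in> info_positions" "info_vec k = info_vec k'"
  then have "info_vec k' k = 1" using info_vec_apply[of k k] by simp
  then show "k = k'" using info_vec_apply[OF \<open>k \<in> info_positions\<close>, of k'] by (simp split: if_splits)
qed

lemma independent_info_vecs: "vec.independent (info_vec ` info_positions)"
proof
  assume "vec.dependent (info_vec ` info_positions)"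
  then obtain u where u: "\<exists>v\<in>info_vec ` info_positions. u v \<noteq> 0"
    and zero: "(\<Sum>v\<in>info_vec ` info_positions. vscale (u v) v) = 0"
    using vec.dependent_finite[OF finite_imageI[OF finite_info_positions]] by blast
  have "u (info_vec k0) = 0" if k0: "k0 \<in> info_positions" for k0
  proof -
    have "0 = (\<Sum>k\<in>info_positions. vscale (u (info_vec k)) (info_vec k)) k0"
      using zero inj_on_info_vec by (simp add: sum.reindex)
    also have "\<dots> = u (info_vec k0)"
      using k0 by (simp add: sum_fun_apply vscale_def info_vec_apply if_distrib[of "\<lambda>c. _ * c"]
          info_positions_def cong: if_cong)
    finally show ?thesis by simp
  qed
  then show False using u by auto
qed

lemma code_dim_code: "code_dim code = N - mb"
  unfolding code_dim_def
proof (rule vec.dim_unique)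
  show "info_vec ` info_positions \<subseteq> code"
    using info_vec_in_code by (auto simp: info_positions_def)
  show "code \<subseteq> vec.span (info_vec ` info_positions)"
  proof
    fix x assume "x \<in> code"
    then have "x = (\<Sum>k\<in>info_positions. vscale (x k) (info_vec k))" by (rule codeword_eq_sum_info_vec)
    also have "\<dots> \<in> vec.span (info_vec ` info_positions)"
      by (intro vec.span_sum vec.span_scale vec.span_base) auto
    finally show "x \<in> vec.span (info_vec ` info_positions)" .
  qed
  show "vec.independent (info_vec ` info_positions)" by (rule independent_info_vecs)
  show "card (info_vec ` info_positions) = N - mb"
    using inj_on_info_vec card_info_positions by (simp add: card_image)
qed

definition block_perm :: "(nat \<Rightarrow> nat) \<Rightarrow> (nat \<Rightarrow> nat) \<Rightarrow> nat \<Rightarrow> nat" where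
  "block_perm \<sigma> \<pi> j = \<sigma> (j div nb) * nb + \<pi> (j mod nb)"

lemma block_perm_mod: "bij_betw \<pi> {..<nb} {..<nb} \<Longrightarrow> block_perm \<sigma> \<pi> j mod nb = \<pi> (j mod nb)"
  using bij_betw_apply[of \<pi> "{..<nb}" "{..<nb}" "j mod nb"] nb_pos by (simp add: block_perm_def)

lemma block_perm_div: "bij_betw \<pi> {..<nb} {..<nb} \<Longrightarrow> block_perm \<sigma> \<pi> j div nb = \<sigma> (j div nb)"
  using bij_betw_apply[of \<pi> "{..<nb}" "{..<nb}" "j mod nb"] nb_pos by (simp add: block_perm_def)

lemma bij_block_perm:
  assumes \<sigma>: "bij_betw \<sigma> {..<na} {..<na}" and \<pi>: "bij_betw \<pi> {..<nb} {..<nb}"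
  shows "bij_betw (block_perm \<sigma> \<pi>) {..<N} {..<N}"
proof -
  have div_lt: "j div nb < na" if "j < N" for j
    using that nb_pos by (simp add: less_mult_imp_div_less)
  have "block_perm \<sigma> \<pi> j < N" if j: "j < N" for j
  proof -
    have "\<sigma> (j div nb) < na" using \<sigma> div_lt[OF j] by (auto dest: bij_betw_apply)
    moreover have "\<pi> (j mod nb) < nb" using bij_betw_apply[OF \<pi>, of "j mod nb"] nb_pos by simp
    ultimately have "\<sigma> (j div nb) * nb + \<pi> (j mod nb) < (\<sigma> (j div nb) + 1) * nb"
      "(\<sigma> (j div nb) + 1) * nb \<le> na * nb" by (simp, intro mult_le_mono1) simp
    then show ?thesis unfolding block_perm_def by linarith
  qed
  then have sub: "block_perm \<sigma> \<pi> ` {..<N} \<subseteq> {..<N}" by auto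
  have "inj_on (block_perm \<sigma> \<pi>) {..<N}"
  proof (rule inj_onI)
    fix j j' assume j: "j \<in> {..<N}" "j' \<in> {..<N}" and eq: "block_perm \<sigma> \<pi> j = block_perm \<sigma> \<pi> j'"
    have "\<sigma> (j div nb) = \<sigma> (j' div nb)"
      using block_perm_div[OF \<pi>, of \<sigma> j] block_perm_div[OF \<pi>, of \<sigma> j'] eq by simp
    then have "j div nb = j' div nb"
      using \<sigma> div_lt j by (auto simp: bij_betw_def dest: inj_onD)
    moreover have "\<pi> (j mod nb) = \<pi> (j' mod nb)"
      using block_perm_mod[OF \<pi>, of \<sigma> j] block_perm_mod[OF \<pi>, of \<sigma> j'] eq by simp
    then have "j mod nb = j' mod nb" using \<pi> nb_pos by (auto simp: bij_betw_def dest: inj_onD)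
    ultimately show "j = j'" by (metis div_mod_decomp)
  qed
  then show ?thesis using sub by (simp add: bij_betw_def endo_inj_surj)
qed

lemma syndrome_vmul_block_perm:
  assumes \<sigma>: "bij_betw \<sigma> {..<na} {..<na}" and t: "permutes_cols t \<pi> c"
  shows "syndrome (vmul N x (perm_matrix N (block_perm \<sigma> \<pi>) (\<lambda>j. \<gamma> * c (j mod nb))))
    = vscale \<gamma> (mat_vec mb t (syndrome x))"
proof
  fix i
  let ?M = "perm_matrix N (block_perm \<sigma> \<pi>) (\<lambda>j. \<gamma> * c (j mod nb))"
  have \<pi>: "bij_betw \<pi> {..<nb} {..<nb}" using t by (simp add: permutes_cols_def)
  note \<rho> = bij_block_perm[OF \<sigma> \<pi>]
  show "syndrome (vmul N x ?M) i = vscale \<gamma> (mat_vec mb t (syndrome x)) i"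
  proof (cases "i < mb")
    case False
    then show ?thesis by (simp add: syndrome_def mat_vec_def vscale_def)
  next
    case True
    have col_t: "(\<Sum>l<mb. t i l * B l k) = c k * B i (\<pi> k)" if "k < nb" for k
    proof -
      have "mat_vec mb t (col k) i = vscale (c k) (col (\<pi> k)) i"
        using t that by (simp add: permutes_cols_def)
      then show ?thesis using True by (simp add: mat_vec_def col_def vscale_def)
    qed
    have "syndrome (vmul N x ?M) i = (\<Sum>j<N. B i (j mod nb) * vmul N x ?M j)"
      using True by (simp add: syndrome_def)
    also have "\<dots> = (\<Sum>j<N. B i (block_perm \<sigma> \<pi> j mod nb) * vmul N x ?M (block_perm \<sigma> \<pi> j))"
      using sum.reindex_bij_betw[OF \<rho>, of "\<lambda>j. B i (j mod nb) * vmul N x ?M j"] by simp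
    also have "\<dots> = (\<Sum>j<N. \<gamma> * (x j * (c (j mod nb) * B i (\<pi> (j mod nb)))))"
    proof (rule sum.cong[OF refl])
      fix j assume "j \<in> {..<N}"
      then have "vmul N x ?M (block_perm \<sigma> \<pi> j) = x j * (\<gamma> * c (j mod nb))"
        by (intro vmul_perm_matrix[OF \<rho>]) simp
      then show "B i (block_perm \<sigma> \<pi> j mod nb) * vmul N x ?M (block_perm \<sigma> \<pi> j)
          = \<gamma> * (x j * (c (j mod nb) * B i (\<pi> (j mod nb))))"
        by (simp add: block_perm_mod[OF \<pi>] algebra_simps)
    qed
    also have "\<dots> = (\<Sum>j<N. \<gamma> * (x j * (\<Sum>l<mb. t i l * B l (j mod nb))))"
      using col_t nb_pos by simp
    also have "\<dots> = \<gamma> * (\<Sum>l<mb. t i l * (\<Sum>j<N. B l (j mod nb) * x j))"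
      by (simp add: sum_distrib_left sum_distrib_right algebra_simps sum.swap[of _ "{..<N}"])
    also have "\<dots> = vscale \<gamma> (mat_vec mb t (syndrome x)) i"
      using True by (simp add: vscale_def mat_vec_def syndrome_def)
    finally show ?thesis .
  qed
qed

lemma block_perm_matrix_in_Aut:
  assumes \<sigma>: "bij_betw \<sigma> {..<na} {..<na}" and t: "permutes_cols t \<pi> c" and \<gamma>: "\<gamma> \<noteq> 0"
  shows "perm_matrix N (block_perm \<sigma> \<pi>) (\<lambda>j. \<gamma> * c (j mod nb)) \<in> Aut N code"
proof (rule Aut_memI)
  have \<pi>: "bij_betw \<pi> {..<nb} {..<nb}" using t by (simp add: permutes_cols_def)
  have "\<forall>j<N. \<gamma> * c (j mod nb) \<noteq> 0" using t \<gamma> nb_pos by (simp add: permutes_cols_def)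
  then show "monomial N (perm_matrix N (block_perm \<sigma> \<pi>) (\<lambda>j. \<gamma> * c (j mod nb)))"
    by (rule monomial_perm_matrix[OF bij_block_perm[OF \<sigma> \<pi>]])
  show "vmul N x (perm_matrix N (block_perm \<sigma> \<pi>) (\<lambda>j. \<gamma> * c (j mod nb))) \<in> code" if "x \<in> code" for x
  proof -
    have "syndrome x = 0" using that by (simp add: code_def)
    then show ?thesis
      by (simp add: code_def vmul_in_vecs syndrome_vmul_block_perm[OF \<sigma> t] mat_vec_zero vscale_zero)
  qed
qed

lemma ex_Aut_moving_unit_vec:
  assumes pq: "p < N" "q < N" and ab: "a \<noteq> 0" "b \<noteq> 0"
  shows "\<exists>M\<in>Aut N code. vmul N (vscale a (unit_vec p)) M = vscale b (unit_vec q)"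
proof -
  define \<sigma> where "\<sigma> x = (if x = p div nb then q div nb else if x = q div nb then p div nb else x)" for x
  have "p div nb < na" "q div nb < na" using pq nb_pos by (simp_all add: less_mult_imp_div_less)
  then have \<sigma>: "bij_betw \<sigma> {..<na} {..<na}"
    unfolding \<sigma>_def by (intro bij_betw_byWitness[where f' = \<sigma>]) (auto simp: \<sigma>_def)
  obtain t \<pi> c where t: "permutes_cols t \<pi> c" and \<pi>p: "\<pi> (p mod nb) = q mod nb"
    using ex_permutes_cols_moving[of "p mod nb" "q mod nb"] nb_pos by auto
  have \<pi>: "bij_betw \<pi> {..<nb} {..<nb}" and c: "c (p mod nb) \<noteq> 0"
    using t nb_pos by (simp_all add: permutes_cols_def)
  define \<gamma> where "\<gamma> = b / (a * c (p mod nb))"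
  have \<gamma>: "\<gamma> \<noteq> 0" using ab c by (simp add: \<gamma>_def)
  define M where "M = perm_matrix N (block_perm \<sigma> \<pi>) (\<lambda>j. \<gamma> * c (j mod nb))"
  note \<rho> = bij_block_perm[OF \<sigma> \<pi>]
  have \<rho>p: "block_perm \<sigma> \<pi> p = q"
    using \<pi>p div_mult_mod_eq[of q nb] by (simp add: block_perm_def \<sigma>_def)
  have "vmul N (vscale a (unit_vec p)) M j = vscale b (unit_vec q) j" for j
  proof (cases "j < N")
    case True
    then obtain i where i: "i < N" "j = block_perm \<sigma> \<pi> i" using \<rho> by (auto simp: bij_betw_def)
    then have "vmul N (vscale a (unit_vec p)) M j = vscale a (unit_vec p) i * (\<gamma> * c (i mod nb))"
      using vmul_perm_matrix[OF \<rho> i(1)] by (simp add: M_def)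
    moreover have "j = q \<longleftrightarrow> i = p"
      using i pq \<rho>p \<rho> by (auto simp: bij_betw_def dest: inj_onD)
    ultimately show ?thesis using ab c by (auto simp: vscale_def unit_vec_def \<gamma>_def)
  next
    case False
    then show ?thesis using pq by (simp add: M_def vmul_def vscale_def unit_vec_def)
  qed
  moreover have "M \<in> Aut N code" unfolding M_def by (rule block_perm_matrix_in_Aut[OF \<sigma> t \<gamma>])
  ultimately show ?thesis by blast
qed

lemma aut_transitive_code: "aut_transitive N code"
  by (rule aut_transitiveI) (rule ex_Aut_moving_unit_vec)

end

theorem theorem3p4:
  fixes A B :: "nat \<Rightarrow> nat \<Rightarrow> 'a::{field,finite}"
    and ra na mb nb :: nat
  assumes "na \<ge> 1"
    and "is_generator_matrix ra na A (repetition_code na)"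
    and "is_hamming_pcm mb nb B"
  defines "n \<equiv> na * nb"
    and "C \<equiv> pcm_code (ra * mb) (na * nb) (kron mb nb A B)"
  shows "C \<subseteq> vecs n \<and> code_dim C = n - mb \<and> covering_radius n C = 1
    \<and> (na > 1 \<longrightarrow> min_distance n C = 2) \<and> (na = 1 \<longrightarrow> min_distance n C = 3)
    \<and> aut_transitive n C \<and> completely_transitive n C \<and> completely_regular n C"
proof -
  interpret hamming_repetition B mb nb na
    by unfold_locales (use assms(1,3) in auto)
  note A = repetition_generator_matrix[OF assms(1,2)]
  have "C = code" unfolding C_def A(1) using pcm_code_kron_repetition[of A, OF A(2,3)] by simp
  then show ?thesis
    unfolding n_def
    using code_subset_vecs code_dim_code covering_radius_eq_1 min_distance_eq_2 min_distance_eq_3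
      aut_transitive_code aut_transitive_imp_completely_transitive[OF aut_transitive_code]
      aut_transitive_imp_completely_regular[OF aut_transitive_code]
    by simp
qed

end
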